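(* Let $\mathcal X=\mathbb R$, let $X$ satisfy $\mathbb E[X^2]<\infty$, and let $\Delta(x,\hat x)=(x-\hat x)^2$. Let $$R(D,0):=\inf\{I(X;\hat X):\mathbb E[(X-\hat X)^2]\le D,\ p_{\hat X}=p_X\}.$$ Then for every $D>0$ and $\epsilon>0$ there exist real random variables $\tilde X$ and $\hat X$, jointly distributed with $X$, such that all of the following hold: - $\tilde X$ is discrete with finite support; - $X\leftrightarrow\tilde X\leftrightarrow\hat X$ is a Markov chain; - $I(X;\tilde X)\le R(D,0)+\epsilon$; - $\mathbb E[(X-\hat X)^2]\le D$; - $p_{\hat X}=p_X$. *)

theory Defs
  imports "HOL-Probability.Probability"
begin

definition kl_div_ext :: "'a measure \<Rightarrow> 'a measure \<Rightarrow> ereal" where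
  "kl_div_ext Q P =
     (if absolutely_continuous Q P \<and> sets P = sets Q \<and>
         integrable P (entropy_density (exp 1) Q P)
      then ereal (KL_divergence (exp 1) Q P) else \<infinity>)"

definition mi_joint :: "(real \<times> real) measure \<Rightarrow> ereal" where
  "mi_joint J = kl_div_ext (distr J borel fst \<Otimes>\<^sub>M distr J borel snd) J"

definition mutual_info :: "'b measure \<Rightarrow> ('b \<Rightarrow> real) \<Rightarrow> ('b \<Rightarrow> real) \<Rightarrow> ereal" where
  "mutual_info N X Y = mi_joint (distr N (borel \<Otimes>\<^sub>M borel) (\<lambda>\<omega>. (X \<omega>, Y \<omega>)))"

definition rate_perfect_realism :: "real measure \<Rightarrow> real \<Rightarrow> ereal" where
  "rate_perfect_realism PX D =
     Inf {mi_joint J | J. prob_space J \<and> sets J = sets (borel \<Otimes>\<^sub>M borel) \<and>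
            distr J borel fst = PX \<and> distr J borel snd = PX \<and>
            (\<integral>\<^sup>+ z. ennreal ((fst z - snd z)^2) \<partial>J) \<le> ennreal D}"

definition markov_chain_fin_mid ::
  "'b measure \<Rightarrow> ('b \<Rightarrow> real) \<Rightarrow> ('b \<Rightarrow> real) \<Rightarrow> ('b \<Rightarrow> real) \<Rightarrow> bool" where
  "markov_chain_fin_mid N X T Y \<longleftrightarrow>
     (\<forall>t A B. A \<in> sets borel \<longrightarrow> B \<in> sets borel \<longrightarrow>
        measure N {\<omega>\<in>space N. X \<omega> \<in> A \<and> T \<omega> = t \<and> Y \<omega> \<in> B} * measure N {\<omega>\<in>space N. T \<omega> = t}
        = measure N {\<omega>\<in>space N. X \<omega> \<in> A \<and> T \<omega> = t} * measure N {\<omega>\<in>space N. T \<omega> = t \<and> Y \<omega> \<in> B})"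

end

theory Submission
  imports Defs
begin

text \<open>Take a coupling of \<open>X\<close> and \<open>X\<^sub>h\<close> with density \<open>f\<close> w.r.t. \<open>P \<otimes> P\<close> that is nearly optimal
  for \<open>R(D,0)\<close>.  Partition the reals into finitely many cells \<open>C\<^sub>i\<close> of small spread, let the tag
  \<open>X\<^sub>t\<close> be the cell of \<open>X\<^sub>h\<close>, i.e. draw it from \<open>X\<close> with the posterior weights
  \<open>a\<^sub>i(x) = P(X\<^sub>h \<in> C\<^sub>i | X = x)\<close>, and draw the new reconstruction from \<open>P\<close> conditioned on \<open>C\<^sub>t\<close>.
  The reconstruction then has law \<open>P\<close>, the chain is Markov, the rate does not exceed \<open>I(X;X\<^sub>h)\<close> by
  the log-sum inequality, and the distortion exceeds \<open>D\<close> only by the small factor \<open>1 + \<eta>\<close>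
  and the cell spread.  To get back below \<open>D\<close>, with a small probability \<open>\<lambda>\<close> the tag is instead
  the cell of \<open>X\<close> in a second fine partition; this costs only \<open>\<lambda>\<close> times a finite entropy.\<close>

section \<open>Elementary inequalities\<close>

lemma log_exp1_eq_ln [simp]: "log (exp 1) y = ln y"
  by (simp add: log_def)

lemma abs_mult_ln_div_le:
  fixes u w :: real
  assumes "0 \<le> u" "u \<le> 1" "0 < w"
  shows "\<bar>u * ln (u / w)\<bar> \<le> 1 + \<bar>ln w\<bar>"
proof (cases "u = 0")
  case False
  then have u: "0 < u" using assms by simp
  have "ln (1 / u) \<le> 1 / u - 1" using u by (intro ln_le_minus_one) simp
  then have "u * (1 - 1 / u) \<le> u * ln u" using u by (intro mult_left_mono) (auto simp: ln_div)
  then have lower: "u - 1 \<le> u * ln u" using u by (simp add: algebra_simps)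
  have upper: "u * ln u \<le> 0" using u assms by (simp add: mult_nonneg_nonpos)
  have "\<bar>u * ln w\<bar> \<le> \<bar>ln w\<bar>" using u assms by (simp add: abs_mult mult_left_le_one_le)
  moreover have "u * ln (u / w) = u * ln u - u * ln w" using u assms by (simp add: ln_div algebra_simps)
  ultimately show ?thesis using lower upper assms by linarith
qed simp

lemma mult_ln_ge_tangent:
  fixes u v :: real
  assumes "0 \<le> u" "0 < v"
  shows "u * (1 + ln v) - v \<le> u * ln u"
proof (cases "u = 0")
  case False
  then have u: "0 < u" using assms by simp
  have "ln (v / u) \<le> v / u - 1" using u assms by (intro ln_le_minus_one) simp
  then have "u * (ln v - ln u) \<le> u * (v / u - 1)" using u assms by (intro mult_left_mono) (auto simp: ln_div)
  then show ?thesis using u by (simp add: algebra_simps)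
qed (use assms in simp)

lemma square_diff_le_weighted:
  fixes x y z \<eta> :: real
  assumes "0 < \<eta>"
  shows "(x - y)^2 \<le> (1 + \<eta>) * (x - z)^2 + (1 + 1 / \<eta>) * (y - z)^2"
proof -
  define a b where "a = x - z" and "b = z - y"
  have "2 * \<eta> * a * b \<le> \<eta>^2 * a^2 + b^2"
    using sum_squares_ge_zero[of "\<eta> * a - b" 0] by (simp add: power2_eq_square algebra_simps)
  then have "2 * a * b \<le> \<eta> * a^2 + b^2 / \<eta>"
    using assms by (simp add: field_simps power2_eq_square)
  then have "(a + b)^2 \<le> (1 + \<eta>) * a^2 + (1 + 1 / \<eta>) * b^2"
    by (simp add: power2_eq_square algebra_simps)
  moreover have "x - y = a + b" "(y - z)^2 = b^2" by (simp_all add: a_def b_def power2_commute)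
  ultimately show ?thesis by (metis a_def)
qed

lemma square_diff_le_two_centered: "(y - y')^2 \<le> 2 * (y - r)^2 + 2 * (y' - r)^2" for y y' r :: real
  using sum_squares_ge_zero[of "y + y' - 2 * r" 0] by (simp add: power2_eq_square algebra_simps)

lemma distortion_budget:
  fixes lam D :: real
  assumes lam: "0 < lam" "lam < 1"
  defines "\<eta> \<equiv> lam / (4 * (1 - lam))"
  shows "(1 - lam) * ((1 + \<eta>) * D + (1 + 1 / \<eta>) * (lam * D / (4 * (1 - lam) * (1 + 1 / \<eta>)))) + lam * (D / 2) = D"
proof -
  define K where "K = (1 - lam) * (1 + 1 / \<eta>)"
  define \<delta> where "\<delta> = lam * D / (4 * K)"
  have "0 < \<eta>" unfolding \<eta>_def using lam by simp
  then have "0 < K" unfolding K_def using lam by (simp add: add_pos_pos)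
  then have spread: "K * \<delta> = lam * D / 4" unfolding \<delta>_def by simp
  have main: "(1 - lam) * (1 + \<eta>) = 1 - 3 * lam / 4" unfolding \<eta>_def using lam by (simp add: field_simps)
  have "4 * (1 - lam) * (1 + 1 / \<eta>) = 4 * K" unfolding K_def by simp
  then have "lam * D / (4 * (1 - lam) * (1 + 1 / \<eta>)) = \<delta>" unfolding \<delta>_def by simp
  then have "(1 - lam) * ((1 + \<eta>) * D + (1 + 1 / \<eta>) * (lam * D / (4 * (1 - lam) * (1 + 1 / \<eta>)))) + lam * (D / 2)
      = ((1 - lam) * (1 + \<eta>)) * D + K * \<delta> + lam * (D / 2)"
    unfolding K_def by (simp only:) (simp add: algebra_simps)
  also have "\<dots> = D" unfolding main spread by (simp add: field_simps)
  finally show ?thesis .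
qed

lemma sum_indicator_singleton_mult:
  "finite T \<Longrightarrow> (\<Sum>\<tau>\<in>T. indicator {s} \<tau> * (c \<tau> :: 'b :: comm_semiring_1)) = (if s \<in> T then c s else 0)"
  by (simp add: indicator_def if_distrib[of "\<lambda>u. u * _"] sum.delta' cong: if_cong)

section \<open>Finite Borel partitions and couplings\<close>

definition borel_partition :: "'i set \<Rightarrow> ('i \<Rightarrow> real set) \<Rightarrow> bool" where
  "borel_partition I C \<longleftrightarrow>
     finite I \<and> (\<forall>i. C i \<in> sets borel) \<and> disjoint_family_on C I \<and> (\<forall>y. \<exists>i\<in>I. y \<in> C i)"

lemma sum_indicator_partition:
  assumes "borel_partition I C"
  shows "(\<Sum>i\<in>I. indicator (C i) y) = (1 :: 'b :: semiring_1)"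
proof -
  obtain j where "j \<in> I" "y \<in> C j" using assms unfolding borel_partition_def by blast
  then show ?thesis
    using sum_indicator_disjoint_family[of C I y j "\<lambda>_. 1 :: 'b"] assms
    by (simp add: borel_partition_def)
qed

lemma AE_sum_indicator_positive_cells:
  assumes P: "prob_space P" and sP: "sets P = sets borel" and part: "borel_partition I C"
  shows "AE y in P. (\<Sum>i\<in>{i\<in>I. 0 < measure P (C i)}. indicator (C i) y :: real) = 1"
proof -
  have finI: "finite I" and Cm: "\<And>i. C i \<in> sets P" using part sP by (auto simp: borel_partition_def)
  have "AE y in P. y \<notin> C i" if "i \<in> I - {i\<in>I. 0 < measure P (C i)}" for i
  proof (rule AE_not_in)
    have "measure P (C i) = 0" using that measure_nonneg[of P "C i"] by auto
    then show "C i \<in> null_sets P"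
      using Cm finite_measure.emeasure_eq_measure[OF prob_space.finite_measure[OF P]] by (simp add: null_sets_def)
  qed
  then have "AE y in P. \<forall>i\<in>I - {i\<in>I. 0 < measure P (C i)}. y \<notin> C i"
    by (intro AE_finite_allI) (use finI in auto)
  then show ?thesis
  proof eventually_elim
    case (elim y)
    have "(\<Sum>i\<in>{i\<in>I. 0 < measure P (C i)}. indicator (C i) y :: real) = (\<Sum>i\<in>I. indicator (C i) y)"
      by (rule sum.mono_neutral_left) (use finI elim in \<open>auto simp: indicator_def\<close>)
    then show ?case using sum_indicator_partition[OF part] by simp
  qed
qed

text \<open>The spread of a cell is \<open>p\<^sup>2 E[(Y - Y')\<^sup>2 | Y, Y' \<in> C]\<close> for \<open>Y, Y'\<close> i.i.d. with law \<open>P\<close>, so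
  the partition spread is the distortion when both source and reconstruction are drawn from \<open>P\<close>
  conditioned on the same random cell.\<close>

definition cell_spread :: "real measure \<Rightarrow> real set \<Rightarrow> ennreal" where
  "cell_spread P C = (\<integral>\<^sup>+y. \<integral>\<^sup>+y'. ennreal ((y - y')^2) * indicator C y * indicator C y' \<partial>P \<partial>P)"

definition partition_spread :: "real measure \<Rightarrow> 'i set \<Rightarrow> ('i \<Rightarrow> real set) \<Rightarrow> ennreal" where
  "partition_spread P I C =
     (\<Sum>i\<in>{i\<in>I. 0 < measure P (C i)}. ennreal (1 / measure P (C i)) * cell_spread P (C i))"

definition coupling_density :: "real measure \<Rightarrow> (real \<times> real \<Rightarrow> real) \<Rightarrow> bool" where
  "coupling_density P f \<longleftrightarrow> f \<in> borel_measurable (borel \<Otimes>\<^sub>M borel) \<and> (\<forall>z. 0 \<le> f z) \<and>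
     (AE x in P. (\<integral>\<^sup>+y. ennreal (f (x, y)) \<partial>P) = 1) \<and> (AE y in P. (\<integral>\<^sup>+x. ennreal (f (x, y)) \<partial>P) = 1)"

definition realism_scheme ::
  "real measure \<Rightarrow> real \<Rightarrow> ereal \<Rightarrow> (real \<times> real \<times> real) measure \<Rightarrow>
     (real \<times> real \<times> real \<Rightarrow> real) \<Rightarrow> (real \<times> real \<times> real \<Rightarrow> real) \<Rightarrow> (real \<times> real \<times> real \<Rightarrow> real) \<Rightarrow> bool"
where
  "realism_scheme P D B N X Xt Xh \<longleftrightarrow>
     prob_space N \<and> X \<in> borel_measurable N \<and> Xt \<in> borel_measurable N \<and> Xh \<in> borel_measurable N \<and>
     distr N borel X = P \<and> finite (Xt ` space N) \<and> markov_chain_fin_mid N X Xt Xh \<and>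
     mutual_info N X Xt \<le> B \<and> (\<integral>\<^sup>+\<omega>. ennreal ((X \<omega> - Xh \<omega>)^2) \<partial>N) \<le> ennreal D \<and> distr N borel Xh = P"

section \<open>Densities, KL divergence and the rate\<close>

lemma kl_div_ext_density_density:
  fixes M :: "'a measure" and g1 g2 :: "'a \<Rightarrow> real"
  assumes sf: "sigma_finite_measure M"
    and m[measurable]: "g1 \<in> borel_measurable M" "g2 \<in> borel_measurable M"
    and nn1: "\<And>x. 0 \<le> g1 x" and nn2: "\<And>x. 0 \<le> g2 x"
    and ac: "AE x in M. g1 x = 0 \<longrightarrow> g2 x = 0"
    and fm: "finite_measure (density M g1)"
    and int: "integrable M (\<lambda>x. g2 x * ln (g2 x / g1 x))"
  shows "kl_div_ext (density M g1) (density M g2) = ereal (\<integral>x. g2 x * ln (g2 x / g1 x) \<partial>M)"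
proof -
  define Q where "Q = density M g1"
  define r where "r x = g2 x / g1 x" for x
  have rm[measurable]: "r \<in> borel_measurable M" unfolding r_def by measurable
  have rnn: "0 \<le> r x" for x unfolding r_def using nn1 nn2 by simp
  have eqd: "density M g2 = density Q r"
    unfolding Q_def r_def using nn1 nn2 ac by (subst density_density_divide) auto
  interpret Q: finite_measure Q unfolding Q_def by (rule fm)
  have sfQ: "sigma_finite_measure Q" by unfold_locales
  have RN: "AE x in Q. RN_deriv Q (density Q r) x = ennreal (r x)"
  proof -
    have "density Q (RN_deriv Q (density Q r)) = density Q r"
      by (rule density_RN_deriv_density) (auto simp: Q_def)
    then show ?thesis
      by (intro sigma_finite_measure.density_unique[OF sfQ]) (auto simp: Q_def)
  qed
  have ent: "AE x in Q. r x * entropy_density (exp 1) Q (density Q r) x = r x * ln (r x)"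
    using RN by eventually_elim (simp add: entropy_density_def rnn)
  have "integrable M (\<lambda>x. g1 x * (r x * ln (r x)))"
    by (rule integrable_cong_AE[THEN iffD1, OF _ _ _ int]) (use ac in \<open>auto simp: r_def elim: AE_mp\<close>)
  then have "integrable Q (\<lambda>x. r x * ln (r x))"
    unfolding Q_def using nn1 by (subst integrable_real_density) auto
  then have "integrable Q (\<lambda>x. r x * entropy_density (exp 1) Q (density Q r) x)"
    by (rule integrable_cong_AE[THEN iffD1, rotated 3]) (use ent in \<open>auto simp: Q_def elim: AE_mp\<close>)
  then have "integrable (density Q r) (entropy_density (exp 1) Q (density Q r))"
    using rnn by (subst integrable_real_density) (auto simp: Q_def)
  moreover have "absolutely_continuous Q (density Q r)"
    by (rule absolutely_continuousI_density) (auto simp: Q_def)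
  moreover have "KL_divergence (exp 1) (density M g1) (density M g2) = (\<integral>x. g2 x * ln (g2 x / g1 x) \<partial>M)"
    using sigma_finite_measure.KL_density_density[OF sf, of "exp 1" g1 g2] nn1 nn2 ac by simp
  ultimately show ?thesis
    unfolding kl_div_ext_def eqd[symmetric] unfolding Q_def eqd by simp
qed

lemma coupling_density_of_density:
  assumes P: "prob_space P" and sP: "sets P = sets borel"
    and fm: "f \<in> borel_measurable (borel \<Otimes>\<^sub>M borel)" and fnn: "\<And>z. 0 \<le> f z"
    and d1: "distr (density (P \<Otimes>\<^sub>M P) (\<lambda>z. ennreal (f z))) borel fst = P"
    and d2: "distr (density (P \<Otimes>\<^sub>M P) (\<lambda>z. ennreal (f z))) borel snd = P"
  shows "coupling_density P f"
proof -
  let ?J = "density (P \<Otimes>\<^sub>M P) (\<lambda>z. ennreal (f z))"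
  have sPP: "sets (P \<Otimes>\<^sub>M P) = sets (borel \<Otimes>\<^sub>M borel)" by (intro sets_pair_measure_cong sP)
  have fm': "(\<lambda>z. ennreal (f z)) \<in> borel_measurable (P \<Otimes>\<^sub>M P)"
    using fm by (simp add: measurable_cong_sets[OF sPP refl])
  have Psf: "sigma_finite_measure P" using P by (rule prob_space_imp_sigma_finite)
  have fst: "fst \<in> ?J \<rightarrow>\<^sub>M P" and snd: "snd \<in> ?J \<rightarrow>\<^sub>M P"
    by (simp_all add: measurable_cong_sets[OF sPP sP])
  have "prob_space (distr ?J P fst)" using d1 P distr_cong[OF refl sP[symmetric], of ?J fst fst] by simp
  then interpret J: prob_space ?J by (rule prob_space_distrD[OF fst])
  have joint: "distributed ?J (P \<Otimes>\<^sub>M P) (\<lambda>\<omega>. (fst \<omega>, snd \<omega>)) (\<lambda>z. ennreal (f z))"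
    unfolding distributed_def using fm' by (simp add: distr_id2)
  have m1: "distributed ?J P fst (\<lambda>_. 1)"
    unfolding distributed_def density_1 using d1 fst distr_cong[OF refl sP[symmetric], of ?J fst fst] by simp
  have m2: "distributed ?J P snd (\<lambda>_. 1)"
    unfolding distributed_def density_1 using d2 snd distr_cong[OF refl sP[symmetric], of ?J snd snd] by simp
  have "AE x in P. (\<integral>\<^sup>+y. ennreal (f (x, y)) \<partial>P) = 1"
    using J.distributed_marginal_eq_joint1[OF Psf Psf m1 joint] by eventually_elim simp
  moreover have "AE y in P. (\<integral>\<^sup>+x. ennreal (f (x, y)) \<partial>P) = 1"
    using J.distributed_marginal_eq_joint2[OF Psf Psf m2 joint] by eventually_elim simp
  ultimately show ?thesis unfolding coupling_density_def using fm fnn by blast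
qed

lemma mi_joint_finite_imp_density:
  fixes P :: "real measure" and J :: "(real \<times> real) measure"
  assumes P: "prob_space P" and sP: "sets P = sets borel" and J: "prob_space J"
    and sJ: "sets J = sets (borel \<Otimes>\<^sub>M borel)"
    and d1: "distr J borel fst = P" and d2: "distr J borel snd = P"
    and fin: "mi_joint J \<noteq> \<infinity>"
  obtains f where "f \<in> borel_measurable (borel \<Otimes>\<^sub>M borel)" "\<And>z. 0 \<le> f z"
    "J = density (P \<Otimes>\<^sub>M P) (\<lambda>z. ennreal (f z))" "integrable (P \<Otimes>\<^sub>M P) (\<lambda>z. f z * ln (f z))"
    "mi_joint J = ereal (\<integral>z. f z * ln (f z) \<partial>(P \<Otimes>\<^sub>M P))"
proof -
  define Q where "Q = P \<Otimes>\<^sub>M P"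
  have sQ[measurable_cong]: "sets Q = sets (borel \<Otimes>\<^sub>M borel)" unfolding Q_def by (intro sets_pair_measure_cong sP)
  have Psf: "sigma_finite_measure P" using P by (simp add: prob_space_imp_sigma_finite)
  have Qsf: "sigma_finite_measure Q" unfolding Q_def by (rule sigma_finite_pair_measure[OF Psf Psf])
  have Jsf: "sigma_finite_measure J" using J by (simp add: prob_space_imp_sigma_finite)
  have "mi_joint J = kl_div_ext Q J" unfolding mi_joint_def d1 d2 Q_def ..
  then have ac: "absolutely_continuous Q J" and sJQ: "sets J = sets Q"
    and ient: "integrable J (entropy_density (exp 1) Q J)"
    and val: "mi_joint J = ereal (KL_divergence (exp 1) Q J)"
    using fin unfolding kl_div_ext_def by (auto split: if_splits)
  define f where "f z = enn2real (RN_deriv Q J z)" for z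
  have fmQ: "f \<in> borel_measurable Q" unfolding f_def by measurable
  have fnn: "0 \<le> f z" for z unfolding f_def by simp
  have Jd: "J = density Q (\<lambda>z. ennreal (f z))"
  proof -
    have "AE z in Q. RN_deriv Q J z = ennreal (f z)"
      using sigma_finite_measure.RN_deriv_finite[OF Qsf Jsf ac sJQ]
      by eventually_elim (auto simp: f_def less_top)
    then have "density Q (RN_deriv Q J) = density Q (\<lambda>z. ennreal (f z))"
      by (rule density_cong[rotated 2]) (use fmQ in auto)
    then show ?thesis using sigma_finite_measure.density_RN_deriv[OF Qsf ac sJQ] by simp
  qed
  have "entropy_density (exp 1) Q J = (\<lambda>z. ln (f z))"
    unfolding entropy_density_def f_def by auto
  then have "integrable (density Q (\<lambda>z. ennreal (f z))) (\<lambda>z. ln (f z))" using ient Jd by simp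
  then have "integrable Q (\<lambda>z. f z * ln (f z))" using fmQ fnn by (subst (asm) integrable_real_density) auto
  moreover have "KL_divergence (exp 1) Q J = (\<integral>z. f z * ln (f z) \<partial>Q)"
    unfolding Jd by (subst sigma_finite_measure.KL_density[OF Qsf]) (use fmQ fnn in auto)
  ultimately show ?thesis
    using that[of f] fmQ fnn Jd val by (simp add: Q_def measurable_cong_sets[OF sQ[unfolded Q_def] refl])
qed

lemma integral_mult_ln_density_nonneg:
  fixes P :: "real measure" and f :: "real \<times> real \<Rightarrow> real"
  assumes P: "prob_space P" and sP: "sets P = sets borel"
    and fm: "f \<in> borel_measurable (borel \<Otimes>\<^sub>M borel)" and fnn: "\<And>z. 0 \<le> f z"
    and pr: "prob_space (density (P \<Otimes>\<^sub>M P) (\<lambda>z. ennreal (f z)))"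
    and int: "integrable (P \<Otimes>\<^sub>M P) (\<lambda>z. f z * ln (f z))"
  shows "0 \<le> (\<integral>z. f z * ln (f z) \<partial>(P \<Otimes>\<^sub>M P))"
proof -
  have sPP: "sets (P \<Otimes>\<^sub>M P) = sets (borel \<Otimes>\<^sub>M borel)" by (intro sets_pair_measure_cong sP)
  have fm': "f \<in> borel_measurable (P \<Otimes>\<^sub>M P)" using fm by (simp add: measurable_cong_sets[OF sPP refl])
  interpret PP: prob_space "P \<Otimes>\<^sub>M P" by (rule prob_space_pair[OF P P])
  interpret I: information_space "P \<Otimes>\<^sub>M P" "exp 1" by standard simp
  have "0 \<le> KL_divergence (exp 1) (P \<Otimes>\<^sub>M P) (density (P \<Otimes>\<^sub>M P) (\<lambda>z. ennreal (f z)))"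
    by (rule I.KL_nonneg[OF pr fm']) (use fnn int in auto)
  also have "\<dots> = (\<integral>z. f z * ln (f z) \<partial>(P \<Otimes>\<^sub>M P))"
    by (subst PP.KL_density) (use fm' fnn in auto)
  finally show ?thesis .
qed

lemma rate_perfect_realism_nonneg:
  assumes P: "prob_space P" and sP: "sets P = sets borel"
  shows "0 \<le> rate_perfect_realism P D"
  unfolding rate_perfect_realism_def
proof (rule Inf_greatest)
  fix m assume "m \<in> {mi_joint J | J. prob_space J \<and> sets J = sets (borel \<Otimes>\<^sub>M borel) \<and>
    distr J borel fst = P \<and> distr J borel snd = P \<and> (\<integral>\<^sup>+ z. ennreal ((fst z - snd z)^2) \<partial>J) \<le> ennreal D}"
  then obtain J where m: "m = mi_joint J" and J: "prob_space J" and sJ: "sets J = sets (borel \<Otimes>\<^sub>M borel)"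
    and d1: "distr J borel fst = P" and d2: "distr J borel snd = P" by blast
  show "0 \<le> m"
  proof (cases "mi_joint J = \<infinity>")
    case False
    obtain f where f: "f \<in> borel_measurable (borel \<Otimes>\<^sub>M borel)" "\<And>z. 0 \<le> f z"
      "J = density (P \<Otimes>\<^sub>M P) (\<lambda>z. ennreal (f z))" "integrable (P \<Otimes>\<^sub>M P) (\<lambda>z. f z * ln (f z))"
      "mi_joint J = ereal (\<integral>z. f z * ln (f z) \<partial>(P \<Otimes>\<^sub>M P))"
      using mi_joint_finite_imp_density[OF P sP J sJ d1 d2 False] by blast
    have "0 \<le> (\<integral>z. f z * ln (f z) \<partial>(P \<Otimes>\<^sub>M P))"
      by (rule integral_mult_ln_density_nonneg[OF P sP f(1,2)]) (use f(3,4) J in auto)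
    then show ?thesis using f(5) m by simp
  qed (simp add: m)
qed

lemma nn_integral_distortion_density:
  fixes P :: "real measure" and f :: "real \<times> real \<Rightarrow> real"
  assumes P: "prob_space P" and sP: "sets P = sets borel"
    and fm: "f \<in> borel_measurable (borel \<Otimes>\<^sub>M borel)"
  shows "(\<integral>\<^sup>+z. ennreal ((fst z - snd z)^2) \<partial>density (P \<Otimes>\<^sub>M P) (\<lambda>z. ennreal (f z)))
       = (\<integral>\<^sup>+x. \<integral>\<^sup>+y. ennreal ((x - y)^2) * ennreal (f (x,y)) \<partial>P \<partial>P)"
proof -
  have sP'[measurable_cong]: "sets P = sets borel" by (rule sP)
  have fm'[measurable]: "f \<in> borel_measurable (borel \<Otimes>\<^sub>M borel)" by (rule fm)
  have Psf: "sigma_finite_measure P" using P by (simp add: prob_space_imp_sigma_finite)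
  have "(\<integral>\<^sup>+z. ennreal ((fst z - snd z)^2) \<partial>density (P \<Otimes>\<^sub>M P) (\<lambda>z. ennreal (f z)))
      = (\<integral>\<^sup>+z. ennreal (f z) * ennreal ((fst z - snd z)^2) \<partial>(P \<Otimes>\<^sub>M P))"
    by (rule nn_integral_density) measurable
  also have "\<dots> = (\<integral>\<^sup>+x. \<integral>\<^sup>+y. ennreal (f (x,y)) * ennreal ((x - y)^2) \<partial>P \<partial>P)"
    using sigma_finite_measure.nn_integral_fst[OF Psf, of "\<lambda>z. ennreal (f z) * ennreal ((fst z - snd z)^2)" P, symmetric]
    by simp
  finally show ?thesis by (simp add: mult.commute)
qed

lemma rate_perfect_realism_approx:
  assumes P: "prob_space P" and sP: "sets P = sets borel"
    and R: "rate_perfect_realism P D < ereal s"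
  obtains f where "coupling_density P f" "integrable (P \<Otimes>\<^sub>M P) (\<lambda>z. f z * ln (f z))"
    "(\<integral>z. f z * ln (f z) \<partial>(P \<Otimes>\<^sub>M P)) < s"
    "(\<integral>\<^sup>+x. \<integral>\<^sup>+y. ennreal ((x - y)^2) * ennreal (f (x,y)) \<partial>P \<partial>P) \<le> ennreal D"
proof -
  obtain J where J: "prob_space J" and sJ: "sets J = sets (borel \<Otimes>\<^sub>M borel)"
    and d1: "distr J borel fst = P" and d2: "distr J borel snd = P"
    and dJ: "(\<integral>\<^sup>+ z. ennreal ((fst z - snd z)^2) \<partial>J) \<le> ennreal D" and Jlt: "mi_joint J < ereal s"
    using R unfolding rate_perfect_realism_def by (auto simp: Inf_less_iff)
  obtain f where fm: "f \<in> borel_measurable (borel \<Otimes>\<^sub>M borel)" and fnn: "\<And>z. 0 \<le> f z"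
    and Jd: "J = density (P \<Otimes>\<^sub>M P) (\<lambda>z. ennreal (f z))" and fint: "integrable (P \<Otimes>\<^sub>M P) (\<lambda>z. f z * ln (f z))"
    and mval: "mi_joint J = ereal (\<integral>z. f z * ln (f z) \<partial>(P \<Otimes>\<^sub>M P))"
    using mi_joint_finite_imp_density[OF P sP J sJ d1 d2] Jlt by force
  show ?thesis
  proof (rule that[OF _ fint])
    show "coupling_density P f" using coupling_density_of_density[OF P sP fm fnn] d1 d2 Jd by simp
    show "(\<integral>z. f z * ln (f z) \<partial>(P \<Otimes>\<^sub>M P)) < s" using Jlt mval by simp
    show "(\<integral>\<^sup>+x. \<integral>\<^sup>+y. ennreal ((x - y)^2) * ennreal (f (x,y)) \<partial>P \<partial>P) \<le> ennreal D"
      using dJ unfolding Jd nn_integral_distortion_density[OF P sP fm] .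
  qed
qed

section \<open>Tagged couplings\<close>

text \<open>A source \<open>X \<sim> P\<close>, a tag \<open>t\<close> in the finite set \<open>T\<close> and a reconstruction \<open>X\<^sub>h \<sim> P\<close>,
  specified by \<open>h t x = P(t | X = x)\<close>, \<open>k t y = P(t | X\<^sub>h = y)\<close> and \<open>w t = P(t)\<close>.  The joint law \<open>N\<close>
  of \<open>(X, t, X\<^sub>h)\<close> has density \<open>h t x k t y / w t\<close> w.r.t. \<open>P \<otimes> count T \<otimes> P\<close>, so \<open>X\<close> and \<open>X\<^sub>h\<close>
  are conditionally independent given the tag.  Tags are reals so that they live in the space
  \<open>real \<times> real \<times> real\<close> of the theorem.\<close>

locale tagged_coupling =
  fixes P :: "real measure" and T :: "real set" and h k :: "real \<Rightarrow> real \<Rightarrow> real" and w :: "real \<Rightarrow> real"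
  assumes P: "prob_space P" and sP: "sets P = sets borel"
    and fin: "finite T" and ne: "T \<noteq> {}"
    and hm[measurable]: "\<And>t. h t \<in> borel_measurable borel" and km[measurable]: "\<And>t. k t \<in> borel_measurable borel"
    and hnn: "\<And>t x. 0 \<le> h t x" and hle1: "\<And>t x. h t x \<le> 1" and knn: "\<And>t x. 0 \<le> k t x"
    and wpos: "\<And>t. t \<in> T \<Longrightarrow> 0 < w t"
    and hint: "\<And>t. t \<in> T \<Longrightarrow> (\<integral>\<^sup>+x. ennreal (h t x) \<partial>P) = ennreal (w t)"
    and kint: "\<And>t. t \<in> T \<Longrightarrow> (\<integral>\<^sup>+x. ennreal (k t x) \<partial>P) = ennreal (w t)"
    and hsum: "AE x in P. (\<Sum>t\<in>T. h t x) = 1"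
    and ksum: "AE x in P. (\<Sum>t\<in>T. k t x) = 1"
begin

sublocale P: prob_space P by (rule P)

lemmas sets_P[measurable_cong] = sP

definition "Tags = distr (count_space T) borel (\<lambda>x. x)"
definition "Ref = P \<Otimes>\<^sub>M (Tags \<Otimes>\<^sub>M P)"
definition "kernel_density \<omega> = (\<Sum>\<tau>\<in>T. indicator {\<tau>} (fst (snd \<omega>)) * (h \<tau> (fst \<omega>) * k \<tau> (snd (snd \<omega>)) / w \<tau>))"
definition "N = density Ref (\<lambda>\<omega>. ennreal (kernel_density \<omega>))"
definition "Xt \<omega> = (if fst (snd \<omega>) \<in> T then fst (snd \<omega>) else Min T)"

lemma sets_Tags[measurable_cong]: "sets Tags = sets borel" unfolding Tags_def by simp

lemma sets_Ref[measurable_cong]: "sets Ref = sets (borel \<Otimes>\<^sub>M (borel \<Otimes>\<^sub>M borel))"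
  unfolding Ref_def by (intro sets_pair_measure_cong sP sets_pair_measure_cong sets_Tags)

lemma finite_measure_Tags: "finite_measure Tags"
proof -
  have "finite_measure (count_space T)" using fin by (rule finite_measure_count_space)
  then show ?thesis unfolding Tags_def
    by (rule finite_measure.finite_measure_distr) (simp add: measurable_count_space_eq1)
qed

lemma sigma_finite_P: "sigma_finite_measure P"
  using P by (simp add: prob_space_imp_sigma_finite)

lemma sigma_finite_Tags: "sigma_finite_measure Tags"
  using finite_measure_Tags by (simp add: finite_measure_def)

lemma sigma_finite_Tags_P: "sigma_finite_measure (Tags \<Otimes>\<^sub>M P)"
  by (rule sigma_finite_pair_measure[OF sigma_finite_Tags sigma_finite_P])

lemma kernel_density_measurable[measurable]: "kernel_density \<in> borel_measurable (borel \<Otimes>\<^sub>M (borel \<Otimes>\<^sub>M borel))"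
  unfolding kernel_density_def by measurable

lemma nn_integral_Tags: "(\<integral>\<^sup>+t. g t \<partial>Tags) = (\<Sum>t\<in>T. g t)" if [measurable]: "g \<in> borel_measurable borel" for g
  unfolding Tags_def
  by (subst nn_integral_distr) (auto simp: measurable_count_space_eq1 nn_integral_count_space_finite fin)

lemma kernel_density_at: "\<tau> \<in> T \<Longrightarrow> kernel_density (x, \<tau>, y) = h \<tau> x * k \<tau> y / w \<tau>"
  unfolding kernel_density_def using fin by (subst sum.remove[of T \<tau>]) (auto intro!: sum.neutral)

lemma nn_integral_N:
  assumes g[measurable]: "g \<in> borel_measurable (borel \<Otimes>\<^sub>M (borel \<Otimes>\<^sub>M borel))"
  shows "(\<integral>\<^sup>+\<omega>. g \<omega> \<partial>N) = (\<Sum>\<tau>\<in>T. \<integral>\<^sup>+x. \<integral>\<^sup>+y. g (x,\<tau>,y) * ennreal (h \<tau> x * k \<tau> y / w \<tau>) \<partial>P \<partial>P)"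
proof -
  have "(\<integral>\<^sup>+\<omega>. g \<omega> \<partial>N) = (\<integral>\<^sup>+\<omega>. ennreal (kernel_density \<omega>) * g \<omega> \<partial>Ref)"
    unfolding N_def by (rule nn_integral_density) measurable
  also have "\<dots> = (\<integral>\<^sup>+x. \<integral>\<^sup>+ty. ennreal (kernel_density (x,ty)) * g (x,ty) \<partial>(Tags \<Otimes>\<^sub>M P) \<partial>P)"
    unfolding Ref_def by (rule sigma_finite_measure.nn_integral_fst[symmetric, OF sigma_finite_Tags_P]) measurable
  also have "\<dots> = (\<integral>\<^sup>+x. \<integral>\<^sup>+t. \<integral>\<^sup>+y. ennreal (kernel_density (x,t,y)) * g (x,t,y) \<partial>P \<partial>Tags \<partial>P)"
    by (intro nn_integral_cong sigma_finite_measure.nn_integral_fst[symmetric, OF sigma_finite_P]) measurable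
  also have "\<dots> = (\<integral>\<^sup>+x. (\<Sum>\<tau>\<in>T. \<integral>\<^sup>+y. g (x,\<tau>,y) * ennreal (h \<tau> x * k \<tau> y / w \<tau>) \<partial>P) \<partial>P)"
    by (intro nn_integral_cong, subst nn_integral_Tags, measurable)
      (auto intro!: sum.cong nn_integral_cong simp: kernel_density_at mult.commute)
  also have "\<dots> = (\<Sum>\<tau>\<in>T. \<integral>\<^sup>+x. \<integral>\<^sup>+y. g (x,\<tau>,y) * ennreal (h \<tau> x * k \<tau> y / w \<tau>) \<partial>P \<partial>P)"
    by (rule nn_integral_sum) measurable
  finally show ?thesis .
qed

lemma space_P: "space P = UNIV"
  using sets_eq_imp_space_eq[OF sP] by simp

lemma space_N: "space N = UNIV"
  unfolding N_def Ref_def using sets_eq_imp_space_eq[OF sets_Tags]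
  by (simp add: space_pair_measure space_P)

lemma sets_N[measurable_cong]: "sets N = sets (borel \<Otimes>\<^sub>M (borel \<Otimes>\<^sub>M borel))"
  unfolding N_def by (simp add: sets_Ref)

lemma T_borel: "T \<in> sets borel"
  using fin by (simp add: finite_imp_closed)

lemma restrict_to_T_measurable[measurable]: "(\<lambda>t::real. if t \<in> T then t else Min T) \<in> borel_measurable borel"
  by (rule measurable_If_set) (auto simp: T_borel)

lemma Xt_measurable[measurable]: "Xt \<in> borel_measurable (borel \<Otimes>\<^sub>M (borel \<Otimes>\<^sub>M borel))"
proof -
  have "Xt = (\<lambda>t::real. if t \<in> T then t else Min T) \<circ> (\<lambda>\<omega>. fst (snd \<omega>))"
    unfolding Xt_def by auto
  also have "\<dots> \<in> borel_measurable (borel \<Otimes>\<^sub>M (borel \<Otimes>\<^sub>M borel))"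
    by (rule measurable_comp[OF _ restrict_to_T_measurable]) measurable
  finally show ?thesis .
qed

lemma Xt_at: "\<tau> \<in> T \<Longrightarrow> Xt (x, \<tau>, y) = \<tau>"
  unfolding Xt_def by simp

lemma Xt_in: "Xt \<omega> \<in> T"
  unfolding Xt_def using fin ne by (auto intro: Min_in)

lemma nn_integral_product_kernel:
  assumes [measurable]: "a \<in> borel_measurable borel" "b \<in> borel_measurable borel"
  shows "(\<integral>\<^sup>+x. \<integral>\<^sup>+y. a x * b y * ennreal (h \<tau> x * k \<tau> y / w \<tau>) \<partial>P \<partial>P) =
         (\<integral>\<^sup>+x. a x * ennreal (h \<tau> x) \<partial>P) * (\<integral>\<^sup>+y. b y * ennreal (k \<tau> y) \<partial>P) * ennreal (1 / w \<tau>)"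
proof -
  have e: "ennreal (h \<tau> x * k \<tau> y / w \<tau>) = ennreal (h \<tau> x) * ennreal (k \<tau> y) * ennreal (1 / w \<tau>)" for x y
  proof (cases "w \<tau> \<ge> 0")
    case True
    then show ?thesis using hnn knn
      by (simp add: ennreal_mult[symmetric] divide_inverse)
  next
    case False
    then show ?thesis using hnn[of \<tau> x] knn[of \<tau> y]
      by (simp add: divide_nonneg_neg ennreal_neg mult_nonneg_nonneg)
  qed
  have "(\<integral>\<^sup>+x. \<integral>\<^sup>+y. a x * b y * ennreal (h \<tau> x * k \<tau> y / w \<tau>) \<partial>P \<partial>P) =
        (\<integral>\<^sup>+x. (a x * ennreal (h \<tau> x) * ennreal (1 / w \<tau>)) * (\<integral>\<^sup>+y. b y * ennreal (k \<tau> y) \<partial>P) \<partial>P)"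
    by (intro nn_integral_cong, subst nn_integral_cmult[symmetric], measurable)
      (auto intro!: nn_integral_cong simp: e mult_ac)
  also have "\<dots> = (\<integral>\<^sup>+x. a x * ennreal (h \<tau> x) \<partial>P) * ennreal (1 / w \<tau>) * (\<integral>\<^sup>+y. b y * ennreal (k \<tau> y) \<partial>P)"
    by (simp add: nn_integral_multc)
  finally show ?thesis by (simp add: mult_ac)
qed

lemma emeasure_X_tag_Xh:
  assumes [measurable]: "A \<in> sets borel" "B \<in> sets borel"
  shows "emeasure N {\<omega>\<in>space N. fst \<omega> \<in> A \<and> Xt \<omega> = s \<and> snd (snd \<omega>) \<in> B} =
     (if s \<in> T then (\<integral>\<^sup>+x. indicator A x * ennreal (h s x) \<partial>P) * (\<integral>\<^sup>+y. indicator B y * ennreal (k s y) \<partial>P) * ennreal (1 / w s) else 0)"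
proof -
  let ?S = "{\<omega>\<in>space N. fst \<omega> \<in> A \<and> Xt \<omega> = s \<and> snd (snd \<omega>) \<in> B}"
  have S: "?S \<in> sets N" by measurable
  have mm: "(\<lambda>\<omega>. indicator A (fst \<omega>) * indicator {s} (Xt \<omega>) * indicator B (snd (snd \<omega>)) :: ennreal) \<in> borel_measurable (borel \<Otimes>\<^sub>M (borel \<Otimes>\<^sub>M borel))"
    by measurable
  have "emeasure N ?S = (\<integral>\<^sup>+\<omega>. indicator A (fst \<omega>) * indicator {s} (Xt \<omega>) * indicator B (snd (snd \<omega>)) \<partial>N)"
    by (subst nn_integral_indicator[OF S, symmetric]) (auto intro!: nn_integral_cong simp: indicator_def space_N)
  also have "\<dots> = (\<Sum>\<tau>\<in>T. \<integral>\<^sup>+x. \<integral>\<^sup>+y. indicator A x * indicator {s} (Xt (x,\<tau>,y)) * indicator B y * ennreal (h \<tau> x * k \<tau> y / w \<tau>) \<partial>P \<partial>P)"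
    by (subst nn_integral_N[where g="\<lambda>\<omega>. indicator A (fst \<omega>) * indicator {s} (Xt \<omega>) * indicator B (snd (snd \<omega>))"]) (rule mm, simp)
  also have "\<dots> = (\<Sum>\<tau>\<in>T. indicator {s} \<tau> * ((\<integral>\<^sup>+x. indicator A x * ennreal (h \<tau> x) \<partial>P) * (\<integral>\<^sup>+y. indicator B y * ennreal (k \<tau> y) \<partial>P) * ennreal (1 / w \<tau>)))"
  proof (rule sum.cong[OF refl])
    fix \<tau> assume t: "\<tau> \<in> T"
    have "(\<integral>\<^sup>+x. \<integral>\<^sup>+y. indicator A x * indicator {s} (Xt (x,\<tau>,y)) * indicator B y * ennreal (h \<tau> x * k \<tau> y / w \<tau>) \<partial>P \<partial>P)
       = (\<integral>\<^sup>+x. \<integral>\<^sup>+y. (indicator {s} \<tau> * indicator A x) * indicator B y * ennreal (h \<tau> x * k \<tau> y / w \<tau>) \<partial>P \<partial>P)"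
      by (simp add: Xt_at[OF t] mult_ac)
    also have "\<dots> = (\<integral>\<^sup>+x. indicator {s} \<tau> * indicator A x * ennreal (h \<tau> x) \<partial>P) * (\<integral>\<^sup>+y. indicator B y * ennreal (k \<tau> y) \<partial>P) * ennreal (1 / w \<tau>)"
      by (rule nn_integral_product_kernel) measurable
    also have "\<dots> = indicator {s} \<tau> * ((\<integral>\<^sup>+x. indicator A x * ennreal (h \<tau> x) \<partial>P) * (\<integral>\<^sup>+y. indicator B y * ennreal (k \<tau> y) \<partial>P) * ennreal (1 / w \<tau>))"
      by (simp add: mult.assoc nn_integral_cmult)
    finally show "(\<integral>\<^sup>+x. \<integral>\<^sup>+y. indicator A x * indicator {s} (Xt (x,\<tau>,y)) * indicator B y * ennreal (h \<tau> x * k \<tau> y / w \<tau>) \<partial>P \<partial>P) = indicator {s} \<tau> * ((\<integral>\<^sup>+x. indicator A x * ennreal (h \<tau> x) \<partial>P) * (\<integral>\<^sup>+y. indicator B y * ennreal (k \<tau> y) \<partial>P) * ennreal (1 / w \<tau>))" .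
  qed
  finally show ?thesis by (simp only: sum_indicator_singleton_mult[OF fin])
qed

lemma weight_inverse: "t \<in> T \<Longrightarrow> ennreal (w t) * ennreal (1 / w t) = 1"
  using wpos[of t] by (simp add: ennreal_mult[symmetric])

lemma weight_inverse_cancel: "t \<in> T \<Longrightarrow> ennreal (w t) * x * ennreal (1 / w t) = x"
proof -
  assume t: "t \<in> T"
  have "ennreal (w t) * x * ennreal (1 / w t) = x * (ennreal (w t) * ennreal (1 / w t))" by (simp add: mult_ac)
  then show ?thesis using weight_inverse[OF t] by simp
qed

lemma measure_X_tag_Xh:
  assumes [measurable]: "A \<in> sets borel" "B \<in> sets borel" and s: "s \<in> T"
  shows "measure N {\<omega>\<in>space N. fst \<omega> \<in> A \<and> Xt \<omega> = s \<and> snd (snd \<omega>) \<in> B} =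
     enn2real (\<integral>\<^sup>+x. indicator A x * ennreal (h s x) \<partial>P) * enn2real (\<integral>\<^sup>+y. indicator B y * ennreal (k s y) \<partial>P) / w s"
  using emeasure_X_tag_Xh[of A B s] s wpos[OF s] unfolding measure_def by (simp add: enn2real_mult)

lemma markov_chain: "markov_chain_fin_mid N fst Xt (\<lambda>\<omega>. snd (snd \<omega>))"
  unfolding markov_chain_fin_mid_def
proof (intro allI impI)
  fix s A B assume A[measurable]: "A \<in> sets (borel :: real measure)" and B[measurable]: "B \<in> sets (borel :: real measure)"
  have e1: "{\<omega>\<in>space N. Xt \<omega> = s} = {\<omega>\<in>space N. fst \<omega> \<in> UNIV \<and> Xt \<omega> = s \<and> snd (snd \<omega>) \<in> UNIV}" by auto
  have e2: "{\<omega>\<in>space N. fst \<omega> \<in> A \<and> Xt \<omega> = s} = {\<omega>\<in>space N. fst \<omega> \<in> A \<and> Xt \<omega> = s \<and> snd (snd \<omega>) \<in> UNIV}" by auto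
  have e3: "{\<omega>\<in>space N. Xt \<omega> = s \<and> snd (snd \<omega>) \<in> B} = {\<omega>\<in>space N. fst \<omega> \<in> UNIV \<and> Xt \<omega> = s \<and> snd (snd \<omega>) \<in> B}" by auto
  show "measure N {\<omega>\<in>space N. fst \<omega> \<in> A \<and> Xt \<omega> = s \<and> snd (snd \<omega>) \<in> B} * measure N {\<omega>\<in>space N. Xt \<omega> = s} =
        measure N {\<omega>\<in>space N. fst \<omega> \<in> A \<and> Xt \<omega> = s} * measure N {\<omega>\<in>space N. Xt \<omega> = s \<and> snd (snd \<omega>) \<in> B}"
  proof (cases "s \<in> T")
    case False
    have "emeasure N {\<omega>\<in>space N. fst \<omega> \<in> A \<and> Xt \<omega> = s} = 0"
      by (subst e2, subst emeasure_X_tag_Xh) (auto simp: False)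
    moreover have "emeasure N {\<omega>\<in>space N. Xt \<omega> = s} = 0"
      by (subst e1, subst emeasure_X_tag_Xh) (auto simp: False)
    ultimately show ?thesis by (simp add: measure_def)
  next
    case True
    let ?a = "enn2real (\<integral>\<^sup>+x. indicator A x * ennreal (h s x) \<partial>P)"
      and ?b = "enn2real (\<integral>\<^sup>+y. indicator B y * ennreal (k s y) \<partial>P)"
    have hk: "enn2real (\<integral>\<^sup>+x. indicator UNIV x * ennreal (h s x) \<partial>P) = w s"
      "enn2real (\<integral>\<^sup>+x. indicator UNIV x * ennreal (k s x) \<partial>P) = w s"
      using hint[OF True] kint[OF True] wpos[OF True] by simp_all
    have UNIV: "UNIV \<in> sets (borel :: real measure)" by simp
    have "measure N {\<omega>\<in>space N. fst \<omega> \<in> A \<and> Xt \<omega> = s \<and> snd (snd \<omega>) \<in> B} = ?a * ?b / w s"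
      by (rule measure_X_tag_Xh[OF A B True])
    moreover have "measure N {\<omega>\<in>space N. Xt \<omega> = s} = w s * w s / w s"
      unfolding e1 measure_X_tag_Xh[OF UNIV UNIV True] hk ..
    moreover have "measure N {\<omega>\<in>space N. fst \<omega> \<in> A \<and> Xt \<omega> = s} = ?a * w s / w s"
      unfolding e2 measure_X_tag_Xh[OF A UNIV True] hk ..
    moreover have "measure N {\<omega>\<in>space N. Xt \<omega> = s \<and> snd (snd \<omega>) \<in> B} = w s * ?b / w s"
      unfolding e3 measure_X_tag_Xh[OF UNIV B True] hk ..
    ultimately show ?thesis using wpos[OF True] by simp
  qed
qed

lemma nn_integral_N_fst:
  assumes [measurable]: "a \<in> borel_measurable borel"
  shows "(\<integral>\<^sup>+\<omega>. a (fst \<omega>) \<partial>N) = (\<integral>\<^sup>+x. a x \<partial>P)"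
proof -
  have "(\<integral>\<^sup>+\<omega>. a (fst \<omega>) \<partial>N) = (\<Sum>\<tau>\<in>T. \<integral>\<^sup>+x. \<integral>\<^sup>+y. a x * 1 * ennreal (h \<tau> x * k \<tau> y / w \<tau>) \<partial>P \<partial>P)"
    by (subst nn_integral_N[where g="\<lambda>\<omega>. a (fst \<omega>)"]) measurable
  also have "\<dots> = (\<Sum>\<tau>\<in>T. \<integral>\<^sup>+x. a x * ennreal (h \<tau> x) \<partial>P)"
  proof (rule sum.cong[OF refl])
    fix \<tau> assume t: "\<tau> \<in> T"
    show "(\<integral>\<^sup>+x. \<integral>\<^sup>+y. a x * 1 * ennreal (h \<tau> x * k \<tau> y / w \<tau>) \<partial>P \<partial>P) = (\<integral>\<^sup>+x. a x * ennreal (h \<tau> x) \<partial>P)"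
      using kint[OF t] weight_inverse[OF t]
      by (subst nn_integral_product_kernel[where b="\<lambda>_. 1"], measurable) (simp add: mult.assoc)
  qed
  also have "\<dots> = (\<integral>\<^sup>+x. (\<Sum>\<tau>\<in>T. a x * ennreal (h \<tau> x)) \<partial>P)"
    by (rule nn_integral_sum[symmetric]) measurable
  also have "\<dots> = (\<integral>\<^sup>+x. a x \<partial>P)"
  proof (rule nn_integral_cong_AE)
    show "AE x in P. (\<Sum>\<tau>\<in>T. a x * ennreal (h \<tau> x)) = a x"
      using hsum
    proof eventually_elim
      case (elim x)
      have "(\<Sum>\<tau>\<in>T. a x * ennreal (h \<tau> x)) = a x * ennreal (\<Sum>\<tau>\<in>T. h \<tau> x)"
      proof -
        have "ennreal (\<Sum>\<tau>\<in>T. h \<tau> x) = (\<Sum>\<tau>\<in>T. ennreal (h \<tau> x))" by (rule sum_ennreal[symmetric]) (simp add: hnn)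
        then show ?thesis by (simp add: sum_distrib_left)
      qed
      then show ?case using elim by simp
    qed
  qed
  finally show ?thesis .
qed

lemma nn_integral_N_Xh:
  assumes [measurable]: "b \<in> borel_measurable borel"
  shows "(\<integral>\<^sup>+\<omega>. b (snd (snd \<omega>)) \<partial>N) = (\<integral>\<^sup>+x. b x \<partial>P)"
proof -
  have "(\<integral>\<^sup>+\<omega>. b (snd (snd \<omega>)) \<partial>N) = (\<Sum>\<tau>\<in>T. \<integral>\<^sup>+x. \<integral>\<^sup>+y. 1 * b y * ennreal (h \<tau> x * k \<tau> y / w \<tau>) \<partial>P \<partial>P)"
    by (subst nn_integral_N[where g="\<lambda>\<omega>. b (snd (snd \<omega>))"]) measurable
  also have "\<dots> = (\<Sum>\<tau>\<in>T. \<integral>\<^sup>+x. b x * ennreal (k \<tau> x) \<partial>P)"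
  proof (rule sum.cong[OF refl])
    fix \<tau> assume t: "\<tau> \<in> T"
    show "(\<integral>\<^sup>+x. \<integral>\<^sup>+y. 1 * b y * ennreal (h \<tau> x * k \<tau> y / w \<tau>) \<partial>P \<partial>P) = (\<integral>\<^sup>+x. b x * ennreal (k \<tau> x) \<partial>P)"
      using hint[OF t] weight_inverse_cancel[OF t]
      by (subst nn_integral_product_kernel[where a="\<lambda>_. 1"]; measurable?; simp)
  qed
  also have "\<dots> = (\<integral>\<^sup>+x. (\<Sum>\<tau>\<in>T. b x * ennreal (k \<tau> x)) \<partial>P)"
    by (rule nn_integral_sum[symmetric]) measurable
  also have "\<dots> = (\<integral>\<^sup>+x. b x \<partial>P)"
  proof (rule nn_integral_cong_AE)
    show "AE x in P. (\<Sum>\<tau>\<in>T. b x * ennreal (k \<tau> x)) = b x"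
      using ksum
    proof eventually_elim
      case (elim x)
      have "(\<Sum>\<tau>\<in>T. b x * ennreal (k \<tau> x)) = b x * ennreal (\<Sum>\<tau>\<in>T. k \<tau> x)"
      proof -
        have "ennreal (\<Sum>\<tau>\<in>T. k \<tau> x) = (\<Sum>\<tau>\<in>T. ennreal (k \<tau> x))" by (rule sum_ennreal[symmetric]) (simp add: knn)
        then show ?thesis by (simp add: sum_distrib_left)
      qed
      then show ?case using elim by simp
    qed
  qed
  finally show ?thesis .
qed

lemma prob_space_N: "prob_space N"
proof (rule prob_spaceI)
  have "emeasure N (space N) = (\<integral>\<^sup>+\<omega>. (\<lambda>_. 1) (fst \<omega>) \<partial>N)"
    by (simp add: space_N)
  also have "\<dots> = (\<integral>\<^sup>+x. 1 \<partial>P)" by (rule nn_integral_N_fst) simp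
  also have "\<dots> = 1" using P by (simp add: prob_space.emeasure_space_1)
  finally show "emeasure N (space N) = 1" .
qed

lemma distr_N_fst: "distr N borel fst = P"
proof (rule measure_eqI)
  show "sets (distr N borel fst) = sets P" by (simp add: sP)
  fix A assume "A \<in> sets (distr N borel fst)"
  then have A[measurable]: "A \<in> sets borel" by simp
  have "emeasure (distr N borel fst) A = emeasure N (fst -` A \<inter> space N)"
    by (rule emeasure_distr[OF _ A]) measurable
  also have "\<dots> = (\<integral>\<^sup>+\<omega>. indicator A (fst \<omega>) \<partial>N)"
  proof -
    have S: "fst -` A \<inter> space N \<in> sets N" by (rule measurable_sets[OF _ A]) measurable
    show ?thesis by (subst nn_integral_indicator[OF S, symmetric]) (auto intro!: nn_integral_cong simp: indicator_def space_N)
  qed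
  also have "\<dots> = emeasure P A" using A by (subst nn_integral_N_fst) (auto simp: sP)
  finally show "emeasure (distr N borel fst) A = emeasure P A" .
qed

lemma distr_N_Xh: "distr N borel (\<lambda>\<omega>. snd (snd \<omega>)) = P"
proof (rule measure_eqI)
  show "sets (distr N borel (\<lambda>\<omega>. snd (snd \<omega>))) = sets P" by (simp add: sP)
  fix A assume "A \<in> sets (distr N borel (\<lambda>\<omega>. snd (snd \<omega>)))"
  then have A[measurable]: "A \<in> sets borel" by simp
  have "emeasure (distr N borel (\<lambda>\<omega>. snd (snd \<omega>))) A = emeasure N ((\<lambda>\<omega>. snd (snd \<omega>)) -` A \<inter> space N)"
    by (rule emeasure_distr[OF _ A]) measurable
  also have "\<dots> = (\<integral>\<^sup>+\<omega>. indicator A (snd (snd \<omega>)) \<partial>N)"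
  proof -
    have S: "(\<lambda>\<omega>. snd (snd \<omega>)) -` A \<inter> space N \<in> sets N" by (rule measurable_sets[OF _ A]) measurable
    show ?thesis by (subst nn_integral_indicator[OF S, symmetric]) (auto intro!: nn_integral_cong simp: indicator_def space_N)
  qed
  also have "\<dots> = emeasure P A" using A by (subst nn_integral_N_Xh) (auto simp: sP)
  finally show "emeasure (distr N borel (\<lambda>\<omega>. snd (snd \<omega>))) A = emeasure P A" .
qed

lemma nn_integral_N_distortion:
  "(\<integral>\<^sup>+\<omega>. ennreal ((fst \<omega> - snd (snd \<omega>))^2) \<partial>N) =
   (\<Sum>\<tau>\<in>T. \<integral>\<^sup>+x. \<integral>\<^sup>+y. ennreal ((x - y)^2) * ennreal (h \<tau> x * k \<tau> y / w \<tau>) \<partial>P \<partial>P)"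
  by (subst nn_integral_N[where g="\<lambda>\<omega>. ennreal ((fst \<omega> - snd (snd \<omega>))^2)"]) measurable

definition "density_XT z = (\<Sum>\<tau>\<in>T. indicator {\<tau>} (snd z) * h \<tau> (fst z))"
definition "tag_weight t = (\<Sum>\<tau>\<in>T. indicator {\<tau>} t * w \<tau>)"

lemma density_XT_measurable[measurable]: "density_XT \<in> borel_measurable (borel \<Otimes>\<^sub>M borel)"
  unfolding density_XT_def by measurable
lemma tag_weight_measurable[measurable]: "tag_weight \<in> borel_measurable borel"
  unfolding tag_weight_def by measurable

lemma density_XT_at: "\<tau> \<in> T \<Longrightarrow> density_XT (x, \<tau>) = h \<tau> x"
  unfolding density_XT_def using fin by (subst sum.remove[of T \<tau>]) (auto intro!: sum.neutral)
lemma density_XT_outside: "t \<notin> T \<Longrightarrow> density_XT (x, t) = 0"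
  unfolding density_XT_def by (auto intro!: sum.neutral simp: indicator_def)
lemma tag_weight_at: "\<tau> \<in> T \<Longrightarrow> tag_weight \<tau> = w \<tau>"
  unfolding tag_weight_def using fin by (subst sum.remove[of T \<tau>]) (auto intro!: sum.neutral)
lemma tag_weight_outside: "t \<notin> T \<Longrightarrow> tag_weight t = 0"
  unfolding tag_weight_def by (auto intro!: sum.neutral simp: indicator_def)
lemma density_XT_nonneg: "0 \<le> density_XT z"
  unfolding density_XT_def by (auto intro!: sum_nonneg simp: hnn)
lemma tag_weight_nonneg: "0 \<le> tag_weight t"
  by (cases "t \<in> T") (auto simp: tag_weight_at tag_weight_outside less_imp_le[OF wpos])

lemma sets_P_Tags[measurable_cong]: "sets (P \<Otimes>\<^sub>M Tags) = sets (borel \<Otimes>\<^sub>M borel)"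
  by (intro sets_pair_measure_cong sP sets_Tags)

lemma fst_Xt_measurable[measurable]: "(\<lambda>\<omega>. (fst \<omega>, Xt \<omega>)) \<in> N \<rightarrow>\<^sub>M borel \<Otimes>\<^sub>M borel"
  by measurable

lemma distr_N_fst_tag: "distr N (borel \<Otimes>\<^sub>M borel) (\<lambda>\<omega>. (fst \<omega>, Xt \<omega>)) = density (P \<Otimes>\<^sub>M Tags) (\<lambda>z. ennreal (density_XT z))"
proof (rule measure_eqI)
  show "sets (distr N (borel \<Otimes>\<^sub>M borel) (\<lambda>\<omega>. (fst \<omega>, Xt \<omega>))) = sets (density (P \<Otimes>\<^sub>M Tags) (\<lambda>z. ennreal (density_XT z)))"
    by (simp add: sets_P_Tags)
  fix S assume "S \<in> sets (distr N (borel \<Otimes>\<^sub>M borel) (\<lambda>\<omega>. (fst \<omega>, Xt \<omega>)))"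
  then have S[measurable]: "S \<in> sets (borel \<Otimes>\<^sub>M borel)" by simp
  have "emeasure (distr N (borel \<Otimes>\<^sub>M borel) (\<lambda>\<omega>. (fst \<omega>, Xt \<omega>))) S = emeasure N ((\<lambda>\<omega>. (fst \<omega>, Xt \<omega>)) -` S \<inter> space N)"
    by (rule emeasure_distr[OF _ S]) measurable
  also have "\<dots> = (\<integral>\<^sup>+\<omega>. indicator S (fst \<omega>, Xt \<omega>) \<partial>N)"
  proof -
    have S': "(\<lambda>\<omega>. (fst \<omega>, Xt \<omega>)) -` S \<inter> space N \<in> sets N" by (rule measurable_sets[OF _ S]) measurable
    show ?thesis by (subst nn_integral_indicator[OF S', symmetric]) (auto intro!: nn_integral_cong simp: indicator_def space_N)
  qed
  also have "\<dots> = (\<Sum>\<tau>\<in>T. \<integral>\<^sup>+x. \<integral>\<^sup>+y. indicator S (x, Xt (x,\<tau>,y)) * ennreal (h \<tau> x * k \<tau> y / w \<tau>) \<partial>P \<partial>P)"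
    by (subst nn_integral_N[where g="\<lambda>\<omega>. indicator S (fst \<omega>, Xt \<omega>)"]) measurable
  also have "\<dots> = (\<Sum>\<tau>\<in>T. \<integral>\<^sup>+x. indicator S (x, \<tau>) * ennreal (h \<tau> x) \<partial>P)"
  proof (rule sum.cong[OF refl])
    fix \<tau> assume t: "\<tau> \<in> T"
    have "(\<integral>\<^sup>+x. \<integral>\<^sup>+y. indicator S (x, Xt (x,\<tau>,y)) * ennreal (h \<tau> x * k \<tau> y / w \<tau>) \<partial>P \<partial>P)
        = (\<integral>\<^sup>+x. \<integral>\<^sup>+y. indicator S (x, \<tau>) * 1 * ennreal (h \<tau> x * k \<tau> y / w \<tau>) \<partial>P \<partial>P)"
      by (simp add: Xt_at[OF t])
    also have "\<dots> = (\<integral>\<^sup>+x. indicator S (x, \<tau>) * ennreal (h \<tau> x) \<partial>P) * (\<integral>\<^sup>+y. 1 * ennreal (k \<tau> y) \<partial>P) * ennreal (1 / w \<tau>)"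
      by (rule nn_integral_product_kernel) measurable
    also have "\<dots> = (\<integral>\<^sup>+x. indicator S (x, \<tau>) * ennreal (h \<tau> x) \<partial>P)"
      using kint[OF t] weight_inverse[OF t] by (simp add: mult.assoc)
    finally show "(\<integral>\<^sup>+x. \<integral>\<^sup>+y. indicator S (x, Xt (x,\<tau>,y)) * ennreal (h \<tau> x * k \<tau> y / w \<tau>) \<partial>P \<partial>P) = (\<integral>\<^sup>+x. indicator S (x, \<tau>) * ennreal (h \<tau> x) \<partial>P)" .
  qed
  also have "\<dots> = (\<integral>\<^sup>+x. (\<Sum>\<tau>\<in>T. indicator S (x, \<tau>) * ennreal (h \<tau> x)) \<partial>P)"
    by (rule nn_integral_sum[symmetric]) measurable
  also have "\<dots> = (\<integral>\<^sup>+x. \<integral>\<^sup>+t. ennreal (density_XT (x,t)) * indicator S (x,t) \<partial>Tags \<partial>P)"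
    by (intro nn_integral_cong, subst nn_integral_Tags, measurable)
      (auto intro!: sum.cong simp: density_XT_at mult.commute)
  also have "\<dots> = (\<integral>\<^sup>+z. ennreal (density_XT z) * indicator S z \<partial>(P \<Otimes>\<^sub>M Tags))"
    by (rule sigma_finite_measure.nn_integral_fst[OF sigma_finite_Tags]) measurable
  also have "\<dots> = emeasure (density (P \<Otimes>\<^sub>M Tags) (\<lambda>z. ennreal (density_XT z))) S"
  proof -
    have gm: "(\<lambda>z. ennreal (density_XT z)) \<in> borel_measurable (P \<Otimes>\<^sub>M Tags)" by measurable
    have Sm: "S \<in> sets (P \<Otimes>\<^sub>M Tags)" using S by (simp add: sets_P_Tags)
    show ?thesis by (simp add: emeasure_density[OF gm Sm] mult.commute)
  qed
  finally show "emeasure (distr N (borel \<Otimes>\<^sub>M borel) (\<lambda>\<omega>. (fst \<omega>, Xt \<omega>))) S = emeasure (density (P \<Otimes>\<^sub>M Tags) (\<lambda>z. ennreal (density_XT z))) S" .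
qed

lemma distr_N_tag: "distr N borel Xt = density Tags (\<lambda>t. ennreal (tag_weight t))"
proof (rule measure_eqI)
  show "sets (distr N borel Xt) = sets (density Tags (\<lambda>t. ennreal (tag_weight t)))" by (simp add: sets_Tags)
  fix A assume "A \<in> sets (distr N borel Xt)"
  then have A[measurable]: "A \<in> sets borel" by simp
  have "emeasure (distr N borel Xt) A = emeasure N (Xt -` A \<inter> space N)"
    by (rule emeasure_distr[OF _ A]) measurable
  also have "\<dots> = (\<integral>\<^sup>+\<omega>. indicator A (Xt \<omega>) \<partial>N)"
  proof -
    have S': "Xt -` A \<inter> space N \<in> sets N" by (rule measurable_sets[OF _ A]) measurable
    show ?thesis by (subst nn_integral_indicator[OF S', symmetric]) (auto intro!: nn_integral_cong simp: indicator_def space_N)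
  qed
  also have "\<dots> = (\<Sum>\<tau>\<in>T. \<integral>\<^sup>+x. \<integral>\<^sup>+y. indicator A (Xt (x,\<tau>,y)) * ennreal (h \<tau> x * k \<tau> y / w \<tau>) \<partial>P \<partial>P)"
    by (subst nn_integral_N[where g="\<lambda>\<omega>. indicator A (Xt \<omega>)"]) measurable
  also have "\<dots> = (\<Sum>\<tau>\<in>T. ennreal (tag_weight \<tau>) * indicator A \<tau>)"
  proof (rule sum.cong[OF refl])
    fix \<tau> assume t: "\<tau> \<in> T"
    have "(\<integral>\<^sup>+x. \<integral>\<^sup>+y. indicator A (Xt (x,\<tau>,y)) * ennreal (h \<tau> x * k \<tau> y / w \<tau>) \<partial>P \<partial>P)
        = (\<integral>\<^sup>+x. \<integral>\<^sup>+y. indicator A \<tau> * 1 * ennreal (h \<tau> x * k \<tau> y / w \<tau>) \<partial>P \<partial>P)"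
      by (simp add: Xt_at[OF t])
    also have "\<dots> = (\<integral>\<^sup>+x. indicator A \<tau> * ennreal (h \<tau> x) \<partial>P) * (\<integral>\<^sup>+y. 1 * ennreal (k \<tau> y) \<partial>P) * ennreal (1 / w \<tau>)"
      by (rule nn_integral_product_kernel) measurable
    also have "\<dots> = indicator A \<tau> * (ennreal (w \<tau>) * ennreal (w \<tau>) * ennreal (1 / w \<tau>))"
      using kint[OF t] hint[OF t] by (simp add: nn_integral_cmult mult_ac)
    also have "\<dots> = ennreal (tag_weight \<tau>) * indicator A \<tau>"
      using weight_inverse_cancel[OF t, of "ennreal (w \<tau>)"] tag_weight_at[OF t] by (simp add: mult.commute)
    finally show "(\<integral>\<^sup>+x. \<integral>\<^sup>+y. indicator A (Xt (x,\<tau>,y)) * ennreal (h \<tau> x * k \<tau> y / w \<tau>) \<partial>P \<partial>P) = ennreal (tag_weight \<tau>) * indicator A \<tau>" .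
  qed
  also have "\<dots> = (\<integral>\<^sup>+t. ennreal (tag_weight t) * indicator A t \<partial>Tags)"
  proof -
    have gm: "(\<lambda>t. ennreal (tag_weight t) * indicator A t) \<in> borel_measurable borel" by measurable
    show ?thesis by (simp add: nn_integral_Tags[OF gm])
  qed
  also have "\<dots> = emeasure (density Tags (\<lambda>t. ennreal (tag_weight t))) A"
  proof -
    have gm: "(\<lambda>t. ennreal (tag_weight t)) \<in> borel_measurable Tags" by measurable
    have Sm: "A \<in> sets Tags" using A by (simp add: sets_Tags)
    show ?thesis by (simp add: emeasure_density[OF gm Sm] mult.commute)
  qed
  finally show "emeasure (distr N borel Xt) A = emeasure (density Tags (\<lambda>t. ennreal (tag_weight t))) A" .
qed

lemma prob_space_tag_law: "prob_space (density Tags (\<lambda>t. ennreal (tag_weight t)))"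
  unfolding distr_N_tag[symmetric] by (rule prob_space.prob_space_distr[OF prob_space_N]) measurable

lemma integral_Tags: "(\<integral>t. g t \<partial>Tags) = (\<Sum>t\<in>T. g t)" if [measurable]: "g \<in> borel_measurable borel" for g :: "real \<Rightarrow> real"
  unfolding Tags_def
  by (subst integral_distr) (auto simp: measurable_count_space_eq1 lebesgue_integral_count_space_finite fin)

lemma abs_entropy_integrand_le: "\<bar>density_XT z * ln (density_XT z / tag_weight (snd z))\<bar> \<le> 1 + (\<Sum>\<tau>\<in>T. \<bar>ln (w \<tau>)\<bar>)"
proof (cases "snd z \<in> T")
  case False
  have "0 \<le> (\<Sum>\<tau>\<in>T. \<bar>ln (w \<tau>)\<bar>)" by (rule sum_nonneg) auto
  then show ?thesis using False density_XT_outside[of "snd z" "fst z"] by (simp add: sum_nonneg)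
next
  case True
  have "\<bar>density_XT z * ln (density_XT z / tag_weight (snd z))\<bar> = \<bar>h (snd z) (fst z) * ln (h (snd z) (fst z) / w (snd z))\<bar>"
    using density_XT_at[OF True, of "fst z"] tag_weight_at[OF True] by simp
  also have "\<dots> \<le> 1 + \<bar>ln (w (snd z))\<bar>" by (rule abs_mult_ln_div_le) (auto simp: hnn hle1 wpos True)
  also have "\<dots> \<le> 1 + (\<Sum>\<tau>\<in>T. \<bar>ln (w \<tau>)\<bar>)"
  proof -
    have "\<bar>ln (w (snd z))\<bar> \<le> (\<Sum>\<tau>\<in>T. \<bar>ln (w \<tau>)\<bar>)" by (rule member_le_sum) (use True fin in auto)
    then show ?thesis by simp
  qed
  finally show ?thesis .
qed

lemma finite_measure_P_Tags: "finite_measure (P \<Otimes>\<^sub>M Tags)"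
  by (rule finite_measure_pair_measure[OF finite_measure_Tags]) (use P in \<open>simp add: prob_space_def\<close>)

lemma integrable_entropy_integrand: "integrable (P \<Otimes>\<^sub>M Tags) (\<lambda>z. density_XT z * ln (density_XT z / tag_weight (snd z)))"
  by (rule finite_measure.integrable_const_bound[OF finite_measure_P_Tags, where B="1 + (\<Sum>\<tau>\<in>T. \<bar>ln (w \<tau>)\<bar>)"]) (use abs_entropy_integrand_le in auto)

lemma integrable_kernel_entropy: "\<tau> \<in> T \<Longrightarrow> integrable P (\<lambda>x. h \<tau> x * ln (h \<tau> x / w \<tau>))"
  using P.finite_measure_axioms
  by (rule finite_measure.integrable_const_bound[where B="1 + \<bar>ln (w \<tau>)\<bar>"])
    (auto intro!: abs_mult_ln_div_le hnn hle1 wpos)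

lemma mutual_info_fst_tag: "mutual_info N fst Xt = ereal (\<Sum>\<tau>\<in>T. \<integral>x. h \<tau> x * ln (h \<tau> x / w \<tau>) \<partial>P)"
proof -
  let ?J = "distr N (borel \<Otimes>\<^sub>M borel) (\<lambda>\<omega>. (fst \<omega>, Xt \<omega>))"
  have d1: "distr ?J borel fst = P"
    by (subst distr_distr) (measurable, simp add: comp_def distr_N_fst)
  have d2: "distr ?J borel snd = density Tags (\<lambda>t. ennreal (tag_weight t))"
    by (subst distr_distr) (measurable, simp add: comp_def distr_N_tag)
  have prod: "P \<Otimes>\<^sub>M density Tags (\<lambda>t. ennreal (tag_weight t)) = density (P \<Otimes>\<^sub>M Tags) (\<lambda>z. ennreal (tag_weight (snd z)))"
  proof -
    have "P \<Otimes>\<^sub>M density Tags (\<lambda>t. ennreal (tag_weight t)) = density P (\<lambda>_. 1) \<Otimes>\<^sub>M density Tags (\<lambda>t. ennreal (tag_weight t))"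
      by (simp add: density_1)
    also have "\<dots> = density (P \<Otimes>\<^sub>M Tags) (\<lambda>(x, y). 1 * ennreal (tag_weight y))"
      by (rule pair_measure_density) (measurable, auto intro: sigma_finite_Tags prob_space_imp_sigma_finite prob_space_tag_law)
    also have "\<dots> = density (P \<Otimes>\<^sub>M Tags) (\<lambda>z. ennreal (tag_weight (snd z)))"
      by (rule density_cong) auto
    finally show ?thesis .
  qed
  have "mutual_info N fst Xt = kl_div_ext (density (P \<Otimes>\<^sub>M Tags) (\<lambda>z. ennreal (tag_weight (snd z)))) (density (P \<Otimes>\<^sub>M Tags) (\<lambda>z. ennreal (density_XT z)))"
    unfolding mutual_info_def mi_joint_def d1 d2 prod by (simp only: distr_N_fst_tag)
  also have "\<dots> = ereal (\<integral>z. density_XT z * ln (density_XT z / tag_weight (snd z)) \<partial>(P \<Otimes>\<^sub>M Tags))"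
  proof (rule kl_div_ext_density_density)
    show "sigma_finite_measure (P \<Otimes>\<^sub>M Tags)" by (rule sigma_finite_pair_measure[OF sigma_finite_P sigma_finite_Tags])
    show "AE z in P \<Otimes>\<^sub>M Tags. tag_weight (snd z) = 0 \<longrightarrow> density_XT z = 0"
    proof (rule AE_I2, intro impI)
      fix z :: "real \<times> real" assume "tag_weight (snd z) = 0"
      then have "snd z \<notin> T" using tag_weight_at wpos by force
      then show "density_XT z = 0" using density_XT_outside[of "snd z" "fst z"] by simp
    qed
    show "finite_measure (density (P \<Otimes>\<^sub>M Tags) (\<lambda>z. ennreal (tag_weight (snd z))))"
      unfolding prod[symmetric] using prob_space_pair[OF P prob_space_tag_law] by (simp add: prob_space_def)
    show "integrable (P \<Otimes>\<^sub>M Tags) (\<lambda>z. density_XT z * ln (density_XT z / tag_weight (snd z)))" by (rule integrable_entropy_integrand)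
  qed (measurable, auto simp: density_XT_nonneg tag_weight_nonneg)
  also have "(\<integral>z. density_XT z * ln (density_XT z / tag_weight (snd z)) \<partial>(P \<Otimes>\<^sub>M Tags)) = (\<integral>x. \<integral>t. density_XT (x,t) * ln (density_XT (x,t) / tag_weight t) \<partial>Tags \<partial>P)"
  proof -
    interpret pair_sigma_finite P Tags
      by (intro pair_sigma_finite.intro sigma_finite_P sigma_finite_Tags)
    show ?thesis using integral_fst'[OF integrable_entropy_integrand] by simp
  qed
  also have "\<dots> = (\<integral>x. (\<Sum>\<tau>\<in>T. h \<tau> x * ln (h \<tau> x / w \<tau>)) \<partial>P)"
    by (intro Bochner_Integration.integral_cong[OF refl], subst integral_Tags, measurable)
      (auto intro!: sum.cong simp: density_XT_at tag_weight_at)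
  also have "\<dots> = (\<Sum>\<tau>\<in>T. \<integral>x. h \<tau> x * ln (h \<tau> x / w \<tau>) \<partial>P)"
    by (rule Bochner_Integration.integral_sum) (rule integrable_kernel_entropy)
  finally show ?thesis .
qed

end
section \<open>Posterior cell weights\<close>

lemma nn_integral_lincomb:
  assumes [measurable]: "f \<in> borel_measurable M" "g \<in> borel_measurable M"
  shows "(\<integral>\<^sup>+x. a * f x + b * g x \<partial>M) = a * integral\<^sup>N M f + b * integral\<^sup>N M g"
  by (subst nn_integral_add) (measurable, simp add: nn_integral_cmult)

text \<open>A coupling density \<open>f\<close> of \<open>(X, X\<^sub>h)\<close> and a partition \<open>C\<close> of the reconstruction space;
  \<open>a i x\<close> is the posterior probability \<open>P(X\<^sub>h \<in> C i | X = x)\<close>, truncated at \<open>1\<close> so that it is a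
  genuine probability everywhere rather than only almost everywhere.\<close>

locale cell_posterior =
  fixes P :: "real measure" and f :: "real \<times> real \<Rightarrow> real" and I :: "'i set" and C :: "'i \<Rightarrow> real set"
  assumes P: "prob_space P" and sP: "sets P = sets borel"
    and coupling: "coupling_density P f"
    and fint: "integrable (P \<Otimes>\<^sub>M P) (\<lambda>z. f z * ln (f z))"
    and part: "borel_partition I C"
begin

sublocale P: prob_space P by (rule P)

lemmas sets_P[measurable_cong] = sP

lemma sets_PP[measurable_cong]: "sets (P \<Otimes>\<^sub>M P) = sets (borel \<Otimes>\<^sub>M borel)"
  by (intro sets_pair_measure_cong sP)

lemma fnn: "0 \<le> f z"
  using coupling unfolding coupling_density_def by blast

lemma fm[measurable]: "f \<in> borel_measurable (borel \<Otimes>\<^sub>M borel)"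
  and fmarg: "AE x in P. (\<integral>\<^sup>+y. ennreal (f (x,y)) \<partial>P) = 1"
  and fmarg2: "AE y in P. (\<integral>\<^sup>+x. ennreal (f (x,y)) \<partial>P) = 1"
  using coupling unfolding coupling_density_def by auto

lemma finI: "finite I" and Cm[measurable]: "C i \<in> sets borel"
  using part unfolding borel_partition_def by auto

definition "p i = measure P (C i)"
definition "a i x = min 1 (enn2real (\<integral>\<^sup>+y. ennreal (f (x,y)) * indicator (C i) y \<partial>P))"
definition "I' = {i\<in>I. 0 < p i}"

lemma sigma_finite_P: "sigma_finite_measure P" using P by (simp add: prob_space_imp_sigma_finite)

lemma posterior_measurable[measurable]: "a i \<in> borel_measurable borel"
proof -
  have "(\<lambda>x. \<integral>\<^sup>+y. ennreal (f (x,y)) * indicator (C i) y \<partial>P) \<in> borel_measurable borel"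
    by (rule sigma_finite_measure.borel_measurable_nn_integral[OF sigma_finite_P]) measurable
  then show ?thesis unfolding a_def by measurable
qed

lemma posterior_nonneg: "0 \<le> a i x" unfolding a_def by simp
lemma posterior_le_1: "a i x \<le> 1" unfolding a_def by simp

lemma integral_cell_mult_ln_ge_tangent:
  fixes g :: "real \<Rightarrow> real"
  assumes [measurable]: "g \<in> borel_measurable borel" and gnn: "\<And>y. 0 \<le> g y"
    and gi: "integrable P g" and gl: "integrable P (\<lambda>y. g y * ln (g y))"
    and [measurable]: "A \<in> sets borel" and v: "0 < v"
  shows "(\<integral>y. indicator A y * g y \<partial>P) * (1 + ln v) - v * measure P A \<le> (\<integral>y. indicator A y * (g y * ln (g y)) \<partial>P)"
proof -
  have A: "A \<in> sets P" using sP by simp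
  have iA: "integrable P (\<lambda>y. indicator A y * g y)" using integrable_mult_indicator[OF A gi] by simp
  have iI: "integrable P (indicator A :: real \<Rightarrow> real)"
    using A by (intro finite_measure.integrable_const_bound[where B=1]) (auto simp: P.finite_measure_axioms)
  have "(\<integral>y. indicator A y * g y \<partial>P) * (1 + ln v) - v * measure P A
      = (\<integral>y. (1 + ln v) * (indicator A y * g y) - v * indicator A y \<partial>P)"
    using iA iI A by (simp add: mult.commute)
  also have "\<dots> \<le> (\<integral>y. indicator A y * (g y * ln (g y)) \<partial>P)"
  proof (rule integral_mono)
    show "integrable P (\<lambda>y. indicator A y * (g y * ln (g y)))"
      using integrable_mult_indicator[OF A gl] by simp
    fix y show "(1 + ln v) * (indicator A y * g y) - v * indicator A y \<le> indicator A y * (g y * ln (g y))"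
      using mult_ln_ge_tangent[OF gnn[of y] v] by (auto simp: indicator_def algebra_simps)
  qed (use iA iI in simp)
  finally show ?thesis .
qed

text \<open>The log-sum inequality on one cell, obtained from the tangent bound with \<open>v = A / q\<close>, or with
  \<open>v\<close> small when the cell mass \<open>A\<close> of \<open>g\<close> vanishes.\<close>

lemma cell_log_sum_le:
  fixes g :: "real \<Rightarrow> real"
  assumes gm[measurable]: "g \<in> borel_measurable borel" and gnn: "\<And>y. 0 \<le> g y"
    and gi: "integrable P g" and gl: "integrable P (\<lambda>y. g y * ln (g y))"
    and Cs[measurable]: "Cs \<in> sets borel" and pp: "0 < measure P Cs"
  shows "(\<integral>y. indicator Cs y * g y \<partial>P) * ln ((\<integral>y. indicator Cs y * g y \<partial>P) / measure P Cs)
         \<le> (\<integral>y. indicator Cs y * (g y * ln (g y)) \<partial>P)"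
proof -
  define A q L where "A = (\<integral>y. indicator Cs y * g y \<partial>P)" and "q = measure P Cs"
    and "L = (\<integral>y. indicator Cs y * (g y * ln (g y)) \<partial>P)"
  note tangent = integral_cell_mult_ln_ge_tangent[OF gm gnn gi gl Cs, folded A_def q_def L_def]
  have "0 \<le> A" unfolding A_def by (rule integral_nonneg_AE) (auto simp: gnn)
  moreover have "0 \<le> L" if "A = 0"
  proof (rule ccontr)
    assume "\<not> 0 \<le> L"
    then have "A * (1 + ln (- L / (2 * q))) - (- L / (2 * q)) * q \<le> L"
      using pp by (intro tangent) (auto simp: q_def divide_neg_pos)
    then show False using \<open>\<not> 0 \<le> L\<close> \<open>A = 0\<close> pp by (simp add: q_def)
  qed
  moreover have "A * ln (A / q) \<le> L" if "0 < A"
    using tangent[of "A / q"] that pp by (simp add: q_def algebra_simps)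
  ultimately show ?thesis unfolding A_def[symmetric] q_def[symmetric] L_def[symmetric]
    by (cases "A = 0") auto
qed

lemma pair_sigma_finite_PP: "pair_sigma_finite P P"
  by (intro pair_sigma_finite.intro sigma_finite_P)

lemma cell_prob_nonneg: "0 \<le> p i" unfolding p_def by simp

lemma integral_null_cell: "i \<notin> I' \<Longrightarrow> i \<in> I \<Longrightarrow> u \<in> borel_measurable borel \<Longrightarrow> (\<integral>y. indicator (C i) y * (u y :: real) \<partial>P) = 0"
proof -
  assume "i \<notin> I'" "i \<in> I" and um[measurable]: "u \<in> borel_measurable borel"
  then have "p i = 0" using cell_prob_nonneg[of i] unfolding I'_def by auto
  moreover have Ci: "C i \<in> sets P" using sP by simp
  ultimately have "emeasure P (C i) = 0" unfolding p_def
    using finite_measure.emeasure_eq_measure[OF prob_space.finite_measure[OF P]] by simp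
  then have "C i \<in> null_sets P" using Ci by (simp add: null_sets_def)
  then have "AE y in P. y \<notin> C i" by (rule AE_not_in)
  then have "AE y in P. indicator (C i) y * u y = 0" by eventually_elim auto
  then show ?thesis by (subst integral_cong_AE[where g="\<lambda>_. 0"]) auto
qed

lemma posterior_eq_integral:
  assumes m1: "(\<integral>\<^sup>+y. ennreal (f (x,y)) \<partial>P) = 1"
  shows "a i x = (\<integral>y. indicator (C i) y * f (x,y) \<partial>P)"
proof -
  have gi: "integrable P (\<lambda>y. f (x,y))"
    by (rule integrableI_nn_integral_finite[where x=1]) (use m1 fnn in auto)
  have "C i \<in> sets P" using sP by simp
  then have ii: "integrable P (\<lambda>y. indicator (C i) y * f (x,y))"
    using integrable_mult_indicator[OF _ gi] by simp
  have "(\<integral>\<^sup>+y. ennreal (f (x,y)) * indicator (C i) y \<partial>P) = ennreal (\<integral>y. indicator (C i) y * f (x,y) \<partial>P)"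
    by (subst nn_integral_eq_integral[OF ii, symmetric]) (auto intro!: nn_integral_cong simp: fnn indicator_def)
  moreover have "(\<integral>y. indicator (C i) y * f (x,y) \<partial>P) \<le> 1"
  proof -
    have "(\<integral>y. indicator (C i) y * f (x,y) \<partial>P) \<le> (\<integral>y. f (x,y) \<partial>P)"
      by (rule integral_mono[OF ii gi]) (auto simp: indicator_def fnn)
    also have "\<dots> = 1" using nn_integral_eq_integral[OF gi] m1 fnn by (simp add: ennreal_eq_1)
    finally show ?thesis .
  qed
  ultimately show ?thesis unfolding a_def by (simp add: integral_nonneg_AE fnn)
qed

lemma sum_integral_cells:
  fixes u :: "real \<Rightarrow> real"
  assumes u: "integrable P u"
  shows "(\<Sum>i\<in>I'. \<integral>y. indicator (C i) y * u y \<partial>P) = (\<integral>y. u y \<partial>P)"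
proof -
  have [measurable]: "u \<in> borel_measurable borel" using borel_measurable_integrable[OF u] by simp
  have "(\<Sum>i\<in>I'. \<integral>y. indicator (C i) y * u y \<partial>P) = (\<Sum>i\<in>I. \<integral>y. indicator (C i) y * u y \<partial>P)"
    by (rule sum.mono_neutral_left) (use finI integral_null_cell[where u=u] in \<open>auto simp: I'_def\<close>)
  also have "\<dots> = (\<integral>y. (\<Sum>i\<in>I. indicator (C i) y * u y) \<partial>P)"
  proof (rule Bochner_Integration.integral_sum[symmetric])
    fix i have "C i \<in> sets P" using sP by simp
    then show "integrable P (\<lambda>y. indicator (C i) y * u y)" using integrable_mult_indicator[OF _ u] by simp
  qed
  also have "\<dots> = (\<integral>y. u y \<partial>P)"
    by (simp add: sum_distrib_right[symmetric] sum_indicator_partition[OF part])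
  finally show ?thesis .
qed

lemma posterior_entropy_le:
  assumes m1: "(\<integral>\<^sup>+y. ennreal (f (x,y)) \<partial>P) = 1"
    and il: "integrable P (\<lambda>y. f (x,y) * ln (f (x,y)))"
  shows "(\<Sum>i\<in>I'. a i x * ln (a i x / p i)) \<le> (\<integral>y. f (x,y) * ln (f (x,y)) \<partial>P)"
proof -
  have gi: "integrable P (\<lambda>y. f (x,y))"
    by (rule integrableI_nn_integral_finite[where x=1]) (use m1 fnn in auto)
  have "(\<Sum>i\<in>I'. a i x * ln (a i x / p i)) \<le> (\<Sum>i\<in>I'. \<integral>y. indicator (C i) y * (f (x,y) * ln (f (x,y))) \<partial>P)"
  proof (rule sum_mono)
    fix i assume "i \<in> I'"
    then have pp: "0 < measure P (C i)" unfolding I'_def p_def by auto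
    show "a i x * ln (a i x / p i) \<le> (\<integral>y. indicator (C i) y * (f (x,y) * ln (f (x,y))) \<partial>P)"
      unfolding posterior_eq_integral[OF m1] p_def
      by (rule cell_log_sum_le[of "\<lambda>y. f (x,y)" "C i", OF _ fnn gi il Cm pp]) measurable
  qed
  also have "\<dots> = (\<integral>y. f (x,y) * ln (f (x,y)) \<partial>P)" by (rule sum_integral_cells[OF il])
  finally show ?thesis .
qed

lemma data_processing_le: "(\<Sum>i\<in>I'. \<integral>x. a i x * ln (a i x / p i) \<partial>P) \<le> (\<integral>z. f z * ln (f z) \<partial>(P \<Otimes>\<^sub>M P))"
proof -
  interpret pair_sigma_finite P P by (rule pair_sigma_finite_PP)
  have fl[measurable]: "(\<lambda>z. f z * ln (f z)) \<in> borel_measurable (P \<Otimes>\<^sub>M P)" by measurable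
  have ia: "integrable P (\<lambda>x. a i x * ln (a i x / p i))" if "i \<in> I'" for i
  proof -
    have pp: "0 < p i" using that unfolding I'_def by auto
    show ?thesis using P.finite_measure_axioms
      by (rule finite_measure.integrable_const_bound[where B="1 + \<bar>ln (p i)\<bar>"])
        (auto intro!: abs_mult_ln_div_le posterior_nonneg posterior_le_1 pp)
  qed
  have "(\<Sum>i\<in>I'. \<integral>x. a i x * ln (a i x / p i) \<partial>P) = (\<integral>x. (\<Sum>i\<in>I'. a i x * ln (a i x / p i)) \<partial>P)"
    by (rule Bochner_Integration.integral_sum[symmetric]) (rule ia)
  also have "\<dots> \<le> (\<integral>x. \<integral>y. f (x,y) * ln (f (x,y)) \<partial>P \<partial>P)"
  proof (rule integral_mono_AE)
    show "integrable P (\<lambda>x. \<Sum>i\<in>I'. a i x * ln (a i x / p i))" by (rule Bochner_Integration.integrable_sum) (rule ia)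
    show "integrable P (\<lambda>x. \<integral>y. f (x,y) * ln (f (x,y)) \<partial>P)"
      using integrable_fst'[OF fint] by simp
    show "AE x in P. (\<Sum>i\<in>I'. a i x * ln (a i x / p i)) \<le> (\<integral>y. f (x,y) * ln (f (x,y)) \<partial>P)"
      using fmarg AE_integrable_fst'[OF fint]
      by eventually_elim (rule posterior_entropy_le, auto)
  qed
  also have "\<dots> = (\<integral>z. f z * ln (f z) \<partial>(P \<Otimes>\<^sub>M P))"
    using integral_fst'[OF fint] by simp
  finally show ?thesis .
qed

definition "cell_distortion i = (\<integral>\<^sup>+x. \<integral>\<^sup>+y. ennreal ((x - y)^2) * ennreal (f (x,y)) * indicator (C i) y \<partial>P \<partial>P)"

lemma posterior_le_nn_integral: "ennreal (a i x) \<le> (\<integral>\<^sup>+y. ennreal (f (x,y)) * indicator (C i) y \<partial>P)"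
proof (cases "(\<integral>\<^sup>+y. ennreal (f (x,y)) * indicator (C i) y \<partial>P) = \<infinity>")
  case False
  have "ennreal (a i x) \<le> ennreal (enn2real (\<integral>\<^sup>+y. ennreal (f (x,y)) * indicator (C i) y \<partial>P))"
    unfolding a_def by (intro ennreal_leI) simp
  also have "\<dots> = (\<integral>\<^sup>+y. ennreal (f (x,y)) * indicator (C i) y \<partial>P)"
    using False by (simp add: less_top)
  finally show ?thesis .
qed simp

lemma nn_integral_posterior_spread:
  "(\<integral>\<^sup>+x. \<integral>\<^sup>+y. \<integral>\<^sup>+y'. ennreal ((y - y')^2) * indicator (C i) y * ennreal (f (x,y')) * indicator (C i) y' \<partial>P \<partial>P \<partial>P)
   = cell_spread P (C i)"
proof -
  interpret pair_sigma_finite P P by unfold_locales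
  define \<psi> where "\<psi> x y y' = ennreal ((y - y')^2) * indicator (C i) y * ennreal (f (x,y')) * indicator (C i) y'" for x y y'
  have [measurable]: "(\<lambda>(x, y). \<integral>\<^sup>+y'. \<psi> x y y' \<partial>P) \<in> borel_measurable (P \<Otimes>\<^sub>M P)"
    "(\<lambda>(x, y'). \<psi> x y y') \<in> borel_measurable (P \<Otimes>\<^sub>M P)" for y
    unfolding \<psi>_def by measurable
  have "(\<integral>\<^sup>+x. \<integral>\<^sup>+y. \<integral>\<^sup>+y'. \<psi> x y y' \<partial>P \<partial>P \<partial>P) = (\<integral>\<^sup>+y. \<integral>\<^sup>+x. \<integral>\<^sup>+y'. \<psi> x y y' \<partial>P \<partial>P \<partial>P)"
    by (rule Fubini') measurable
  also have "\<dots> = (\<integral>\<^sup>+y. \<integral>\<^sup>+y'. \<integral>\<^sup>+x. \<psi> x y y' \<partial>P \<partial>P \<partial>P)"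
    by (intro nn_integral_cong Fubini') measurable
  also have "\<dots> = (\<integral>\<^sup>+y. \<integral>\<^sup>+y'. ennreal ((y - y')^2) * indicator (C i) y * indicator (C i) y' \<partial>P \<partial>P)"
  proof (rule nn_integral_cong)
    fix y
    show "(\<integral>\<^sup>+y'. \<integral>\<^sup>+x. \<psi> x y y' \<partial>P \<partial>P) = (\<integral>\<^sup>+y'. ennreal ((y - y')^2) * indicator (C i) y * indicator (C i) y' \<partial>P)"
    proof (rule nn_integral_cong_AE)
      show "AE y' in P. (\<integral>\<^sup>+x. \<psi> x y y' \<partial>P) = ennreal ((y - y')^2) * indicator (C i) y * indicator (C i) y'"
        using fmarg2
      proof eventually_elim
        case (elim y')
        have "(\<integral>\<^sup>+x. \<psi> x y y' \<partial>P) = (\<integral>\<^sup>+x. (ennreal ((y - y')^2) * indicator (C i) y * indicator (C i) y') * ennreal (f (x,y')) \<partial>P)"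
          unfolding \<psi>_def by (simp add: mult_ac)
        also have "\<dots> = ennreal ((y - y')^2) * indicator (C i) y * indicator (C i) y' * (\<integral>\<^sup>+x. ennreal (f (x,y')) \<partial>P)"
          by (rule nn_integral_cmult) measurable
        finally show ?case using elim by simp
      qed
    qed
  qed
  finally show ?thesis unfolding \<psi>_def cell_spread_def .
qed

lemma nn_integral_posterior_distortion:
  "(\<integral>\<^sup>+x. \<integral>\<^sup>+y. \<integral>\<^sup>+y'. ennreal ((x - y')^2) * indicator (C i) y * ennreal (f (x,y')) * indicator (C i) y' \<partial>P \<partial>P \<partial>P)
   = ennreal (p i) * cell_distortion i"
proof -
  have "(\<integral>\<^sup>+y. \<integral>\<^sup>+y'. ennreal ((x - y')^2) * indicator (C i) y * ennreal (f (x,y')) * indicator (C i) y' \<partial>P \<partial>P)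
      = (\<integral>\<^sup>+y. indicator (C i) y * (\<integral>\<^sup>+y'. ennreal ((x - y')^2) * ennreal (f (x,y')) * indicator (C i) y' \<partial>P) \<partial>P)" for x
    by (intro nn_integral_cong) (simp add: nn_integral_cmult[symmetric] mult_ac)
  also have "\<dots> x = ennreal (p i) * (\<integral>\<^sup>+y'. ennreal ((x - y')^2) * ennreal (f (x,y')) * indicator (C i) y' \<partial>P)" for x
    by (simp add: nn_integral_multc p_def P.emeasure_eq_measure)
  finally show ?thesis unfolding cell_distortion_def by (simp add: nn_integral_cmult)
qed

text \<open>In the triple integrals \<open>y'\<close> is the original reconstruction and \<open>y\<close> the new one, drawn from
  the cell of \<open>y'\<close>; the distortion is split as \<open>x - y = (x - y') + (y' - y)\<close>.\<close>

lemma nn_integral_posterior_triangle: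
  assumes eta: "0 < \<eta>"
  shows "(\<integral>\<^sup>+x. \<integral>\<^sup>+y. \<integral>\<^sup>+y'. ennreal ((x - y)^2) * indicator (C i) y * ennreal (f (x,y')) * indicator (C i) y' \<partial>P \<partial>P \<partial>P)
     \<le> ennreal (1 + \<eta>) * (ennreal (p i) * cell_distortion i) + ennreal (1 + 1 / \<eta>) * cell_spread P (C i)"
proof -
  define g1 g2 where "g1 x y y' = ennreal ((x - y')^2) * indicator (C i) y * ennreal (f (x,y')) * indicator (C i) y'"
    and "g2 x y y' = ennreal ((y - y')^2) * indicator (C i) y * ennreal (f (x,y')) * indicator (C i) y'" for x y y'
  define a1 a2 where "a1 = ennreal (1 + \<eta>)" and "a2 = ennreal (1 + 1 / \<eta>)"
  have "ennreal ((x - y)^2) \<le> a1 * ennreal ((x - y')^2) + a2 * ennreal ((y - y')^2)" for x y y'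
    using square_diff_le_weighted[OF eta, of x y y'] eta unfolding a1_def a2_def
    by (simp add: ennreal_plus[symmetric] ennreal_mult[symmetric] ennreal_leI del: ennreal_plus)
  then have "ennreal ((x - y)^2) * (indicator (C i) y * ennreal (f (x,y')) * indicator (C i) y')
      \<le> (a1 * ennreal ((x - y')^2) + a2 * ennreal ((y - y')^2)) * (indicator (C i) y * ennreal (f (x,y')) * indicator (C i) y')" for x y y'
    by (rule mult_right_mono) simp
  then have triangle: "ennreal ((x - y)^2) * indicator (C i) y * ennreal (f (x,y')) * indicator (C i) y' \<le> a1 * g1 x y y' + a2 * g2 x y y'" for x y y'
    unfolding g1_def g2_def by (simp only: distrib_right mult.assoc)
  have "(\<integral>\<^sup>+x. \<integral>\<^sup>+y. \<integral>\<^sup>+y'. ennreal ((x - y)^2) * indicator (C i) y * ennreal (f (x,y')) * indicator (C i) y' \<partial>P \<partial>P \<partial>P)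
      \<le> (\<integral>\<^sup>+x. \<integral>\<^sup>+y. \<integral>\<^sup>+y'. a1 * g1 x y y' + a2 * g2 x y y' \<partial>P \<partial>P \<partial>P)"
    by (intro nn_integral_mono triangle)
  also have "\<dots> = (\<integral>\<^sup>+x. a1 * (\<integral>\<^sup>+y. \<integral>\<^sup>+y'. g1 x y y' \<partial>P \<partial>P) + a2 * (\<integral>\<^sup>+y. \<integral>\<^sup>+y'. g2 x y y' \<partial>P \<partial>P) \<partial>P)"
  proof (intro nn_integral_cong)
    fix x
    have "(\<integral>\<^sup>+y'. a1 * g1 x y y' + a2 * g2 x y y' \<partial>P) = a1 * (\<integral>\<^sup>+y'. g1 x y y' \<partial>P) + a2 * (\<integral>\<^sup>+y'. g2 x y y' \<partial>P)" for y
      by (rule nn_integral_lincomb) (unfold g1_def g2_def, measurable)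
    then show "(\<integral>\<^sup>+y. \<integral>\<^sup>+y'. a1 * g1 x y y' + a2 * g2 x y y' \<partial>P \<partial>P)
      = a1 * (\<integral>\<^sup>+y. \<integral>\<^sup>+y'. g1 x y y' \<partial>P \<partial>P) + a2 * (\<integral>\<^sup>+y. \<integral>\<^sup>+y'. g2 x y y' \<partial>P \<partial>P)"
      by (simp only:) (rule nn_integral_lincomb; unfold g1_def g2_def; measurable)
  qed
  also have "\<dots> = a1 * (\<integral>\<^sup>+x. \<integral>\<^sup>+y. \<integral>\<^sup>+y'. g1 x y y' \<partial>P \<partial>P \<partial>P) + a2 * (\<integral>\<^sup>+x. \<integral>\<^sup>+y. \<integral>\<^sup>+y'. g2 x y y' \<partial>P \<partial>P \<partial>P)"
    by (rule nn_integral_lincomb) (unfold g1_def g2_def, measurable)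
  also have "\<dots> = a1 * (ennreal (p i) * cell_distortion i) + a2 * cell_spread P (C i)"
    unfolding g1_def g2_def nn_integral_posterior_distortion nn_integral_posterior_spread ..
  finally show ?thesis unfolding a1_def a2_def .
qed

lemma nn_integral_cell_distortion_le:
  assumes i: "i \<in> I'" and c: "0 \<le> c" and eta: "0 < \<eta>"
  shows "(\<integral>\<^sup>+x. \<integral>\<^sup>+y. ennreal ((x - y)^2) * ennreal (c * a i x * indicator (C i) y / p i) \<partial>P \<partial>P)
    \<le> ennreal c * (ennreal (1 + \<eta>) * cell_distortion i + ennreal (1 + 1 / \<eta>) * ennreal (1 / p i) * cell_spread P (C i))"
proof -
  have pp: "0 < p i" using i unfolding I'_def by auto
  define K where "K = ennreal c * ennreal (1 / p i)"
  define G where "G x y = (\<integral>\<^sup>+y'. ennreal ((x - y)^2) * indicator (C i) y * ennreal (f (x,y')) * indicator (C i) y' \<partial>P)" for x y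
  have "ennreal ((x - y)^2) * ennreal (c * a i x * indicator (C i) y / p i) \<le> K * G x y" for x y
  proof -
    have "ennreal (c * a i x * indicator (C i) y / p i) = K * (ennreal (a i x) * indicator (C i) y)"
      unfolding K_def using c pp posterior_nonneg[of i x]
      by (simp add: ennreal_mult'[symmetric] ennreal_indicator[symmetric] mult_ac del: ennreal_indicator)
    also have "\<dots> \<le> K * ((\<integral>\<^sup>+y'. ennreal (f (x,y')) * indicator (C i) y' \<partial>P) * indicator (C i) y)"
      by (intro mult_left_mono mult_right_mono posterior_le_nn_integral) auto
    finally have "ennreal ((x - y)^2) * ennreal (c * a i x * indicator (C i) y / p i)
        \<le> K * (ennreal ((x - y)^2) * indicator (C i) y * (\<integral>\<^sup>+y'. ennreal (f (x,y')) * indicator (C i) y' \<partial>P))"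
      by (rule mult_left_mono[THEN order_trans]) (simp_all add: mult_ac)
    also have "\<dots> = K * G x y"
      unfolding G_def by (subst nn_integral_cmult[symmetric]) (measurable, simp add: mult_ac)
    finally show ?thesis .
  qed
  then have "(\<integral>\<^sup>+x. \<integral>\<^sup>+y. ennreal ((x - y)^2) * ennreal (c * a i x * indicator (C i) y / p i) \<partial>P \<partial>P)
      \<le> (\<integral>\<^sup>+x. \<integral>\<^sup>+y. K * G x y \<partial>P \<partial>P)"
    by (intro nn_integral_mono)
  also have "\<dots> = K * (\<integral>\<^sup>+x. \<integral>\<^sup>+y. G x y \<partial>P \<partial>P)"
  proof -
    have "(\<integral>\<^sup>+y. K * G x y \<partial>P) = K * (\<integral>\<^sup>+y. G x y \<partial>P)" for x
      by (rule nn_integral_cmult) (unfold G_def, measurable)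
    then show ?thesis by (simp only:) (rule nn_integral_cmult, unfold G_def, measurable)
  qed
  also have "\<dots> \<le> K * (ennreal (1 + \<eta>) * (ennreal (p i) * cell_distortion i) + ennreal (1 + 1 / \<eta>) * cell_spread P (C i))"
    unfolding G_def by (intro mult_left_mono nn_integral_posterior_triangle eta) simp
  also have "\<dots> = ennreal c * (ennreal (1 + \<eta>) * cell_distortion i + ennreal (1 + 1 / \<eta>) * ennreal (1 / p i) * cell_spread P (C i))"
  proof -
    have "ennreal (1 / p i) * ennreal (p i) = 1" using pp by (simp add: ennreal_mult[symmetric])
    moreover have "K * (ennreal (1 + \<eta>) * (ennreal (p i) * cell_distortion i) + ennreal (1 + 1 / \<eta>) * cell_spread P (C i))
      = ennreal c * (ennreal (1 + \<eta>) * cell_distortion i * (ennreal (1 / p i) * ennreal (p i))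
          + ennreal (1 + 1 / \<eta>) * ennreal (1 / p i) * cell_spread P (C i))"
      unfolding K_def by (simp add: algebra_simps)
    ultimately show ?thesis by simp
  qed
  finally show ?thesis .
qed

lemma AE_posterior_eq: "AE x in P. \<forall>i. ennreal (a i x) = (\<integral>\<^sup>+y. ennreal (f (x,y)) * indicator (C i) y \<partial>P)"
  using fmarg
proof eventually_elim
  case (elim x)
  show ?case
  proof
    fix i
    define J where "J = (\<integral>\<^sup>+y. ennreal (f (x,y)) * indicator (C i) y \<partial>P)"
    have "J \<le> (\<integral>\<^sup>+y. ennreal (f (x,y)) \<partial>P)" unfolding J_def
      by (intro nn_integral_mono) (simp add: indicator_def)
    then have J1: "J \<le> 1" using elim by simp
    have Jt: "J < \<infinity>" by (rule le_less_trans[OF J1]) simp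
    have "enn2real J \<le> 1" using J1 Jt by (simp add: enn2real_leI)
    then have "a i x = enn2real J" unfolding a_def J_def by simp
    then show "ennreal (a i x) = J" using Jt by (simp add: less_top)
  qed
qed

lemma nn_integral_posterior: "(\<integral>\<^sup>+x. ennreal (a i x) \<partial>P) = ennreal (p i)"
proof -
  interpret pair_sigma_finite P P by (rule pair_sigma_finite_PP)
  have "(\<integral>\<^sup>+x. ennreal (a i x) \<partial>P) = (\<integral>\<^sup>+x. \<integral>\<^sup>+y. ennreal (f (x,y)) * indicator (C i) y \<partial>P \<partial>P)"
    by (rule nn_integral_cong_AE) (use AE_posterior_eq in \<open>auto elim: AE_mp\<close>)
  also have "\<dots> = (\<integral>\<^sup>+y. \<integral>\<^sup>+x. ennreal (f (x,y)) * indicator (C i) y \<partial>P \<partial>P)"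
  proof -
    have m: "(\<lambda>(x, y). ennreal (f (x,y)) * indicator (C i) y) \<in> borel_measurable (P \<Otimes>\<^sub>M P)" by measurable
    show ?thesis using Fubini'[OF m] by simp
  qed
  also have "\<dots> = (\<integral>\<^sup>+y. indicator (C i) y \<partial>P)"
  proof (rule nn_integral_cong_AE)
    show "AE y in P. (\<integral>\<^sup>+x. ennreal (f (x,y)) * indicator (C i) y \<partial>P) = indicator (C i) y"
      using fmarg2
    proof eventually_elim
      case (elim y)
      have "(\<integral>\<^sup>+x. ennreal (f (x,y)) * indicator (C i) y \<partial>P) = (\<integral>\<^sup>+x. ennreal (f (x,y)) \<partial>P) * indicator (C i) y"
        by (rule nn_integral_multc) measurable
      then show ?case using elim by simp
    qed
  qed
  also have "\<dots> = ennreal (p i)"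
    unfolding p_def using sP by (simp add: finite_measure.emeasure_eq_measure[OF prob_space.finite_measure[OF P]])
  finally show ?thesis .
qed

lemma AE_posterior_null_cell: "i \<in> I \<Longrightarrow> i \<notin> I' \<Longrightarrow> AE x in P. a i x = 0"
proof -
  assume "i \<in> I" "i \<notin> I'"
  then have "p i = 0" using cell_prob_nonneg[of i] unfolding I'_def by auto
  then have "(\<integral>\<^sup>+x. ennreal (a i x) \<partial>P) = 0" using nn_integral_posterior by simp
  then have "AE x in P. ennreal (a i x) = 0" by (subst (asm) nn_integral_0_iff_AE) auto
  then show ?thesis
  proof eventually_elim
    case (elim x)
    then have "a i x \<le> 0" by (simp add: ennreal_eq_0_iff)
    then show ?case using posterior_nonneg[of i x] by linarith
  qed
qed

lemma AE_sum_posterior: "AE x in P. (\<Sum>i\<in>I'. a i x) = 1"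
proof -
  have z: "AE x in P. \<forall>i\<in>I - I'. a i x = 0"
    using finI by (subst AE_finite_all) (auto intro: AE_posterior_null_cell)
  show ?thesis using z AE_posterior_eq fmarg
  proof eventually_elim
    case (elim x)
    have "(\<Sum>i\<in>I'. a i x) = (\<Sum>i\<in>I. a i x)"
      by (rule sum.mono_neutral_left) (use finI elim in \<open>auto simp: I'_def\<close>)
    moreover have "ennreal (\<Sum>i\<in>I. a i x) = 1"
    proof -
      have "ennreal (\<Sum>i\<in>I. a i x) = (\<Sum>i\<in>I. ennreal (a i x))" by (rule sum_ennreal[symmetric]) (simp add: posterior_nonneg)
      also have "\<dots> = (\<Sum>i\<in>I. \<integral>\<^sup>+y. ennreal (f (x,y)) * indicator (C i) y \<partial>P)" using elim by simp
      also have "\<dots> = (\<integral>\<^sup>+y. (\<Sum>i\<in>I. ennreal (f (x,y)) * indicator (C i) y) \<partial>P)"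
        by (rule nn_integral_sum[symmetric]) measurable
      also have "\<dots> = (\<integral>\<^sup>+y. ennreal (f (x,y)) \<partial>P)"
      proof (rule nn_integral_cong)
        fix y
        have "(\<Sum>i\<in>I. indicator (C i) y :: ennreal) = 1" by (rule sum_indicator_partition[OF part])
        moreover have "(\<Sum>i\<in>I. ennreal (f (x,y)) * indicator (C i) y) = ennreal (f (x,y)) * (\<Sum>i\<in>I. indicator (C i) y)"
          by (rule sum_distrib_left[symmetric])
        ultimately show "(\<Sum>i\<in>I. ennreal (f (x,y)) * indicator (C i) y) = ennreal (f (x,y))" by simp
      qed
      finally show ?thesis using elim by simp
    qed
    ultimately show ?case using posterior_nonneg by (simp add: ennreal_eq_1 sum_nonneg)
  qed
qed

lemma sum_cell_distortion_le: "(\<Sum>i\<in>I'. cell_distortion i) \<le> (\<integral>\<^sup>+x. \<integral>\<^sup>+y. ennreal ((x - y)^2) * ennreal (f (x,y)) \<partial>P \<partial>P)"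
proof -
  have sub: "I' \<subseteq> I" unfolding I'_def by blast
  have "(\<Sum>i\<in>I'. cell_distortion i) \<le> (\<Sum>i\<in>I. cell_distortion i)"
    by (rule sum_mono2[OF finI sub]) simp
  also have "\<dots> = (\<integral>\<^sup>+x. (\<Sum>i\<in>I. \<integral>\<^sup>+y. ennreal ((x - y)^2) * ennreal (f (x,y)) * indicator (C i) y \<partial>P) \<partial>P)"
    unfolding cell_distortion_def
    by (rule nn_integral_sum[symmetric]) (rule sigma_finite_measure.borel_measurable_nn_integral[OF sigma_finite_P], measurable)
  also have "\<dots> = (\<integral>\<^sup>+x. \<integral>\<^sup>+y. ennreal ((x - y)^2) * ennreal (f (x,y)) \<partial>P \<partial>P)"
  proof (rule nn_integral_cong)
    fix x
    have "(\<Sum>i\<in>I. \<integral>\<^sup>+y. ennreal ((x - y)^2) * ennreal (f (x,y)) * indicator (C i) y \<partial>P)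
        = (\<integral>\<^sup>+y. (\<Sum>i\<in>I. ennreal ((x - y)^2) * ennreal (f (x,y)) * indicator (C i) y) \<partial>P)"
      by (rule nn_integral_sum[symmetric]) measurable
    also have "\<dots> = (\<integral>\<^sup>+y. ennreal ((x - y)^2) * ennreal (f (x,y)) \<partial>P)"
    proof (rule nn_integral_cong)
      fix y
      have "(\<Sum>i\<in>I. indicator (C i) y :: ennreal) = 1" by (rule sum_indicator_partition[OF part])
      moreover have "(\<Sum>i\<in>I. ennreal ((x - y)^2) * ennreal (f (x,y)) * indicator (C i) y) = ennreal ((x - y)^2) * ennreal (f (x,y)) * (\<Sum>i\<in>I. indicator (C i) y)"
        by (rule sum_distrib_left[symmetric])
      ultimately show "(\<Sum>i\<in>I. ennreal ((x - y)^2) * ennreal (f (x,y)) * indicator (C i) y) = ennreal ((x - y)^2) * ennreal (f (x,y))" by simp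
    qed
    finally show "(\<Sum>i\<in>I. \<integral>\<^sup>+y. ennreal ((x - y)^2) * ennreal (f (x,y)) * indicator (C i) y \<partial>P) = (\<integral>\<^sup>+y. ennreal ((x - y)^2) * ennreal (f (x,y)) \<partial>P)" .
  qed
  finally show ?thesis .
qed

end
section \<open>Fine partitions of the reals\<close>

lemma nn_integral_indep_product:
  assumes [measurable]: "u \<in> borel_measurable M" "v \<in> borel_measurable M"
  shows "(\<integral>\<^sup>+y. \<integral>\<^sup>+y'. u y * v y' \<partial>M \<partial>M) = integral\<^sup>N M u * integral\<^sup>N M v"
proof -
  have "(\<integral>\<^sup>+y'. u y * v y' \<partial>M) = u y * integral\<^sup>N M v" for y by (rule nn_integral_cmult) measurable
  then show ?thesis by (simp only:) (rule nn_integral_multc, measurable)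
qed

lemma cell_spread_le:
  assumes P: "prob_space P" and sP: "sets P = sets borel" and C[measurable]: "C \<in> sets borel"
  shows "cell_spread P C \<le> 4 * emeasure P C * (\<integral>\<^sup>+y. ennreal ((y - r)^2) * indicator C y \<partial>P)"
proof -
  interpret P: prob_space P by (rule P)
  have [measurable_cong]: "sets P = sets borel" by (rule sP)
  define A where "A y = 2 * (ennreal ((y - r)^2) * indicator C y)" for y
  have A[measurable]: "A \<in> borel_measurable borel" unfolding A_def by measurable
  have "ennreal ((y - y')^2) * indicator C y * indicator C y' \<le> A y * indicator C y' + indicator C y * A y'" for y y'
  proof -
    have "ennreal ((y - y')^2) \<le> ennreal (2 * (y - r)^2 + 2 * (y' - r)^2)"
      by (intro ennreal_leI square_diff_le_two_centered)
    also have "\<dots> = 2 * ennreal ((y - r)^2) + 2 * ennreal ((y' - r)^2)"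
      by (simp add: ennreal_plus ennreal_mult)
    finally have "ennreal ((y - y')^2) \<le> 2 * ennreal ((y - r)^2) + 2 * ennreal ((y' - r)^2)" .
    then show ?thesis by (cases "y \<in> C"; cases "y' \<in> C") (simp_all add: A_def)
  qed
  then have "cell_spread P C \<le> (\<integral>\<^sup>+y. \<integral>\<^sup>+y'. A y * indicator C y' + indicator C y * A y' \<partial>P \<partial>P)"
    unfolding cell_spread_def by (intro nn_integral_mono)
  also have "\<dots> = (\<integral>\<^sup>+y. \<integral>\<^sup>+y'. A y * indicator C y' \<partial>P \<partial>P) + (\<integral>\<^sup>+y. \<integral>\<^sup>+y'. indicator C y * A y' \<partial>P \<partial>P)"
  proof -
    have "(\<integral>\<^sup>+y'. A y * indicator C y' + indicator C y * A y' \<partial>P)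
        = (\<integral>\<^sup>+y'. A y * indicator C y' \<partial>P) + (\<integral>\<^sup>+y'. indicator C y * A y' \<partial>P)" for y
      by (rule nn_integral_add) measurable
    then show ?thesis by (simp only:) (rule nn_integral_add; measurable)
  qed
  also have "\<dots> = 2 * (emeasure P C * integral\<^sup>N P A)"
    using nn_integral_indep_product[of A P "indicator C"] nn_integral_indep_product[of "indicator C" P A]
    by (simp add: mult_2 mult.commute)
  also have "integral\<^sup>N P A = 2 * (\<integral>\<^sup>+y. ennreal ((y - r)^2) * indicator C y \<partial>P)"
    unfolding A_def by (rule nn_integral_cmult) measurable
  finally show ?thesis by (simp add: mult_ac)
qed

lemma partition_spread_le_centers:
  assumes P: "prob_space P" and sP: "sets P = sets borel" and part: "borel_partition I C"
  shows "partition_spread P I C \<le> 4 * (\<integral>\<^sup>+y. (\<Sum>i\<in>I. ennreal ((y - r i)^2) * indicator (C i) y) \<partial>P)"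
proof -
  have [measurable_cong]: "sets P = sets borel" by (rule sP)
  have finI: "finite I" and [measurable]: "\<And>i. C i \<in> sets borel" using part by (auto simp: borel_partition_def)
  define E where "E i = (\<integral>\<^sup>+y. ennreal ((y - r i)^2) * indicator (C i) y \<partial>P)" for i
  have "ennreal (1 / measure P (C i)) * cell_spread P (C i) \<le> 4 * E i" if "0 < measure P (C i)" for i
  proof -
    have "emeasure P (C i) = ennreal (measure P (C i))"
      using sP by (simp add: finite_measure.emeasure_eq_measure[OF prob_space.finite_measure[OF P]])
    moreover have "ennreal (1 / measure P (C i)) * ennreal (measure P (C i)) = 1"
      using that by (simp add: ennreal_mult[symmetric])
    moreover have "ennreal (1 / measure P (C i)) * cell_spread P (C i)
        \<le> ennreal (1 / measure P (C i)) * (4 * emeasure P (C i) * E i)"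
      unfolding E_def by (intro mult_left_mono cell_spread_le[OF P sP]) auto
    ultimately show ?thesis by (simp add: mult_ac)
  qed
  then have "partition_spread P I C \<le> (\<Sum>i\<in>{i\<in>I. 0 < measure P (C i)}. 4 * E i)"
    unfolding partition_spread_def by (intro sum_mono) simp
  also have "\<dots> \<le> (\<Sum>i\<in>I. 4 * E i)"
    by (rule sum_mono2[OF finI]) auto
  also have "\<dots> = 4 * (\<integral>\<^sup>+y. (\<Sum>i\<in>I. ennreal ((y - r i)^2) * indicator (C i) y) \<partial>P)"
    unfolding E_def by (subst nn_integral_sum) (measurable, simp add: sum_distrib_left)
  finally show ?thesis .
qed

text \<open>The grid of mesh \<open>1/n\<close> on \<open>(-n, n)\<close>; all points with \<open>|y| \<ge> n\<close> share the overflow cell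
  \<open>n\<^sup>2\<close>, whose center \<open>0\<close> makes the quantization error there equal to \<open>y\<^sup>2\<close>.\<close>

definition grid_cell :: "nat \<Rightarrow> real \<Rightarrow> int" where
  "grid_cell n y = (if \<bar>y\<bar> < real n then \<lfloor>real n * y\<rfloor> else int (n * n))"

definition grid_center :: "nat \<Rightarrow> int \<Rightarrow> real" where
  "grid_center n i = (if i = int (n * n) then 0 else real_of_int i / real n)"

lemma grid_cell_measurable[measurable]: "grid_cell n \<in> borel \<rightarrow>\<^sub>M count_space UNIV"
  unfolding grid_cell_def by measurable

lemma grid_cell_range: "grid_cell n y \<in> {- int (n * n) .. int (n * n)}"
proof (cases "\<bar>y\<bar> < real n")
  case True
  then have y: "- real n < y" "y < real n" and npos: "0 < real n" by auto
  have "- (real n * real n) < real n * y" using mult_strict_left_mono[OF y(1) npos] by simp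
  moreover have "real n * y < real n * real n" using mult_strict_left_mono[OF y(2) npos] by simp
  ultimately show ?thesis using True by (simp add: grid_cell_def le_floor_iff floor_le_iff)
qed (simp add: grid_cell_def)

lemma grid_partition: "borel_partition {- int (n * n) .. int (n * n)} (\<lambda>i. {y. grid_cell n y = i})"
proof -
  have "{y. grid_cell n y = i} \<in> sets borel" for i
    using measurable_sets[OF grid_cell_measurable, of "{i}"] by (simp add: vimage_def)
  then show ?thesis
    unfolding borel_partition_def disjoint_family_on_def using grid_cell_range by auto
qed

lemma grid_error_le:
  assumes n: "1 \<le> n"
  shows "(y - grid_center n (grid_cell n y))^2 \<le> 1 / (real n)^2 + y^2 * indicator {y. real n \<le> \<bar>y\<bar>} y"
proof (cases "\<bar>y\<bar> < real n")
  case True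
  define k where "k = \<lfloor>real n * y\<rfloor>"
  have npos: "0 < real n" using n by simp
  have "y < real n" using True by simp
  then have "real n * y < real n * real n" using mult_strict_left_mono npos by blast
  moreover have k1: "real_of_int k \<le> real n * y" and k2: "real n * y < real_of_int k + 1"
    unfolding k_def by linarith+
  ultimately have "k \<noteq> int (n * n)" by auto
  then have "grid_center n (grid_cell n y) = real_of_int k / real n"
    using True by (simp add: grid_cell_def grid_center_def k_def)
  moreover have "0 \<le> y - real_of_int k / real n" using k1 npos by (simp add: field_simps)
  moreover have "y - real_of_int k / real n = (real n * y - real_of_int k) / real n" using npos by (simp add: field_simps)
  then have "y - real_of_int k / real n \<le> 1 / real n"
    using k2 npos by (simp add: divide_right_mono)
  ultimately have "(y - grid_center n (grid_cell n y))^2 \<le> (1 / real n)^2"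
    by (simp add: power_mono)
  then show ?thesis using True by (simp add: power_divide indicator_def)
qed (simp add: grid_cell_def grid_center_def indicator_def)

lemma tail_second_moment_small:
  fixes P :: "real measure"
  assumes sP: "sets P = sets borel" and int2: "integrable P (\<lambda>y. y^2)" and e: "0 < e"
  shows "\<exists>N. \<forall>n\<ge>N. (\<integral>y. y^2 * indicator {y. real n \<le> \<bar>y\<bar>} y \<partial>P) < e"
proof -
  have [measurable_cong]: "sets P = sets borel" by (rule sP)
  have "(\<lambda>n. \<integral>y. y^2 * indicator {y. real n \<le> \<bar>y\<bar>} y \<partial>P) \<longlonglongrightarrow> (\<integral>y. 0 \<partial>P)"
  proof (rule integral_dominated_convergence[where w="\<lambda>y. y^2"])
    show "AE y in P. (\<lambda>n. y^2 * indicator {y. real n \<le> \<bar>y\<bar>} y) \<longlonglongrightarrow> 0"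
    proof (rule AE_I2, rule tendsto_eventually)
      fix y :: real
      obtain N :: nat where "\<bar>y\<bar> < real N" using reals_Archimedean2 by blast
      then show "eventually (\<lambda>n. y^2 * indicator {y. real n \<le> \<bar>y\<bar>} y = 0) sequentially"
        unfolding eventually_sequentially by (intro exI[of _ N]) (auto simp: indicator_def)
    qed
  qed (use int2 in \<open>auto simp: indicator_def\<close>)
  then have "eventually (\<lambda>n. (\<integral>y. y^2 * indicator {y. real n \<le> \<bar>y\<bar>} y \<partial>P) < e) sequentially"
    using e by (auto intro: order_tendstoD)
  then show ?thesis unfolding eventually_sequentially .
qed

lemma exists_partition_spread_le:
  assumes P: "prob_space P" and sP: "sets P = sets borel" and int2: "integrable P (\<lambda>y. y^2)" and d: "0 < \<delta>"
  shows "\<exists>(I :: int set) C. borel_partition I C \<and> partition_spread P I C \<le> ennreal \<delta>"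
proof -
  have [measurable_cong]: "sets P = sets borel" by (rule sP)
  define tail where "tail n = (\<integral>y. y^2 * indicator {y. real n \<le> \<bar>y\<bar>} y \<partial>P)" for n :: nat
  obtain N1 where N1: "\<And>n. n \<ge> N1 \<Longrightarrow> tail n < \<delta> / 8"
    using tail_second_moment_small[OF sP int2, of "\<delta> / 8"] d unfolding tail_def by auto
  obtain N2 :: nat where N2: "8 / \<delta> < real N2" using reals_Archimedean2 by blast
  define n where "n = max (max N1 N2) 1"
  have n1: "1 \<le> n" and "N2 \<le> n" unfolding n_def by auto
  then have "8 / \<delta> < real n" using N2 by (meson of_nat_le_iff less_le_trans)
  then have "1 / real n < \<delta> / 8" using d n1 by (simp add: field_simps)
  moreover have "1 / (real n)^2 \<le> 1 / real n" using n1 by (simp add: power2_eq_square field_simps)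
  moreover have "tail n < \<delta> / 8" by (rule N1) (simp add: n_def)
  ultimately have small: "4 * (1 / (real n)^2 + tail n) \<le> \<delta>" by simp
  have tail_nn: "0 \<le> tail n" unfolding tail_def by (rule integral_nonneg_AE) (simp add: indicator_def)
  have int_tail: "integrable P (\<lambda>y. y^2 * indicator {y. real n \<le> \<bar>y\<bar>} y)"
    by (rule Bochner_Integration.integrable_bound[OF int2]) (auto simp: indicator_def)
  let ?C = "\<lambda>i. {y. grid_cell n y = i}" and ?I = "{- int (n * n) .. int (n * n)}"
  have "(\<integral>\<^sup>+y. (\<Sum>i\<in>?I. ennreal ((y - grid_center n i)^2) * indicator (?C i) y) \<partial>P)
      = (\<integral>\<^sup>+y. ennreal ((y - grid_center n (grid_cell n y))^2) \<partial>P)"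
    using grid_cell_range grid_partition[of n]
    by (intro nn_integral_cong sum_indicator_disjoint_family) (auto simp: borel_partition_def)
  also have "\<dots> \<le> (\<integral>\<^sup>+y. ennreal (1 / (real n)^2) + ennreal (y^2 * indicator {y. real n \<le> \<bar>y\<bar>} y) \<partial>P)"
    by (intro nn_integral_mono) (simp add: ennreal_plus[symmetric] grid_error_le[OF n1] del: ennreal_plus)
  also have "\<dots> = ennreal (1 / (real n)^2) + ennreal (tail n)"
  proof -
    have "(\<integral>\<^sup>+y. ennreal (y^2 * indicator {y. real n \<le> \<bar>y\<bar>} y) \<partial>P) = ennreal (tail n)"
      unfolding tail_def by (rule nn_integral_eq_integral[OF int_tail]) (simp add: indicator_def)
    then show ?thesis using P by (subst nn_integral_add) (auto simp: prob_space.emeasure_space_1)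
  qed
  also have "\<dots> = ennreal (1 / (real n)^2 + tail n)"
    using tail_nn by (simp add: ennreal_plus)
  finally have quantization_error:
    "(\<integral>\<^sup>+y. (\<Sum>i\<in>?I. ennreal ((y - grid_center n i)^2) * indicator (?C i) y) \<partial>P) \<le> ennreal (1 / (real n)^2 + tail n)" .
  have "partition_spread P ?I ?C \<le> 4 * (\<integral>\<^sup>+y. (\<Sum>i\<in>?I. ennreal ((y - grid_center n i)^2) * indicator (?C i) y) \<partial>P)"
    by (rule partition_spread_le_centers[OF P sP grid_partition])
  also have "\<dots> \<le> 4 * ennreal (1 / (real n)^2 + tail n)"
    by (rule mult_left_mono[OF quantization_error]) simp
  also have "\<dots> = ennreal (4 * (1 / (real n)^2 + tail n))"
    using tail_nn by (subst ennreal_mult) auto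
  also have "\<dots> \<le> ennreal \<delta>" using small by (rule ennreal_leI)
  finally show ?thesis using grid_partition by blast
qed

section \<open>Mixing two tagging rules\<close>

text \<open>Tags are reals: the even number \<open>2 i\<close> stands for cell \<open>i\<close> of the partition of the
  reconstruction, the odd number \<open>2 j + 1\<close> for cell \<open>j\<close> of the partition of the source.\<close>

definition ytag :: "int \<Rightarrow> real" where "ytag i = 2 * real_of_int i"
definition xtag :: "int \<Rightarrow> real" where "xtag j = 2 * real_of_int j + 1"

lemma inj_ytag: "inj ytag" unfolding ytag_def by (auto intro: injI)
lemma inj_xtag: "inj xtag" unfolding xtag_def by (auto intro: injI)

lemma ytag_neq_xtag: "ytag i \<noteq> xtag j"
proof
  assume "ytag i = xtag j"
  then have "real_of_int (2 * i) = real_of_int (2 * j + 1)" unfolding ytag_def xtag_def by simp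
  then show False by presburger
qed

lemma sum_tags:
  assumes "finite A" "finite B"
  shows "(\<Sum>t\<in>ytag ` A \<union> xtag ` B. g t) = (\<Sum>i\<in>A. g (ytag i)) + (\<Sum>j\<in>B. g (xtag j))"
  using assms ytag_neq_xtag inj_ytag inj_xtag
  by (subst sum.union_disjoint) (auto simp: sum.reindex inj_on_subset)

text \<open>With probability \<open>1 - lam\<close> the tag is the cell of the reconstruction, drawn from the source
  with the posterior weights \<open>a\<close>; with probability \<open>lam\<close> it is the cell of the source itself in
  the second partition \<open>C1\<close>, and the reconstruction is drawn from \<open>P\<close> conditioned on that cell.
  Cells of probability zero, and for \<open>lam = 1\<close> the whole first rule, are left out so that every
  tag has positive weight.\<close>

locale mixed_tagging = cell_posterior P f I0 C0 for P f and I0 :: "int set" and C0 +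
  fixes I1 :: "int set" and C1 :: "int \<Rightarrow> real set" and lam :: real
  assumes part1: "borel_partition I1 C1" and lam: "0 < lam" "lam \<le> 1"
begin

lemma finI1: "finite I1" and C1m[measurable]: "C1 j \<in> sets borel"
  using part1 unfolding borel_partition_def by auto

definition "p1 j = measure P (C1 j)"
definition "I1' = {j\<in>I1. 0 < p1 j}"
definition "I0'' = {i\<in>I'. lam < 1}"
definition "T = ytag ` I0'' \<union> xtag ` I1'"
definition "h t x = (if t \<in> ytag ` I0'' then (1 - lam) * a (THE i. ytag i = t) x
   else if t \<in> xtag ` I1' then lam * indicator (C1 (THE j. xtag j = t)) x else 0)"
definition "k t x = (if t \<in> ytag ` I0'' then (1 - lam) * indicator (C0 (THE i. ytag i = t)) x
   else if t \<in> xtag ` I1' then lam * indicator (C1 (THE j. xtag j = t)) x else 0)"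
definition "w t = (if t \<in> ytag ` I0'' then (1 - lam) * p (THE i. ytag i = t)
   else if t \<in> xtag ` I1' then lam * p1 (THE j. xtag j = t) else 0)"

lemma the_ytag: "(THE i. ytag i = ytag i') = i'" using inj_ytag by (auto dest: injD)
lemma the_xtag: "(THE j. xtag j = xtag j') = j'" using inj_xtag by (auto dest: injD)

lemma xtag_notin_ytags: "xtag j \<notin> ytag ` B" using ytag_neq_xtag by (metis image_iff)

lemma h_ytag: "i \<in> I0'' \<Longrightarrow> h (ytag i) x = (1 - lam) * a i x" unfolding h_def by (simp add: the_ytag)
lemma h_xtag: "j \<in> I1' \<Longrightarrow> h (xtag j) x = lam * indicator (C1 j) x" unfolding h_def by (simp add: the_xtag xtag_notin_ytags)
lemma k_ytag: "i \<in> I0'' \<Longrightarrow> k (ytag i) x = (1 - lam) * indicator (C0 i) x" unfolding k_def by (simp add: the_ytag)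
lemma k_xtag: "j \<in> I1' \<Longrightarrow> k (xtag j) x = lam * indicator (C1 j) x" unfolding k_def by (simp add: the_xtag xtag_notin_ytags)
lemma w_ytag: "i \<in> I0'' \<Longrightarrow> w (ytag i) = (1 - lam) * p i" unfolding w_def by (simp add: the_ytag)
lemma w_xtag: "j \<in> I1' \<Longrightarrow> w (xtag j) = lam * p1 j" unfolding w_def by (simp add: the_xtag xtag_notin_ytags)

lemma finI': "finite I'" unfolding I'_def using finI by simp
lemma finI0'': "finite I0''" unfolding I0''_def using finI' by simp
lemma finI1': "finite I1'" unfolding I1'_def using finI1 by simp
lemma finT: "finite T" unfolding T_def using finI0'' finI1' by simp

lemma h_meas[measurable]: "h t \<in> borel_measurable borel"
  unfolding h_def by (cases "t \<in> ytag ` I0''"; cases "t \<in> xtag ` I1'") simp_all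
lemma k_meas[measurable]: "k t \<in> borel_measurable borel"
  unfolding k_def by (cases "t \<in> ytag ` I0''"; cases "t \<in> xtag ` I1'") simp_all

lemma I1'_ne: "I1' \<noteq> {}"
proof
  assume e: "I1' = {}"
  have "AE x in P. (\<Sum>j\<in>{j\<in>I1. 0 < measure P (C1 j)}. indicator (C1 j) x :: real) = 1"
    by (rule AE_sum_indicator_positive_cells[OF P sP part1])
  then have "AE x in P. False" using e unfolding I1'_def p1_def by simp
  then show False using prob_space.AE_False[OF P] by simp
qed

lemma T_ne: "T \<noteq> {}" unfolding T_def using I1'_ne by simp

lemma p_pos: "i \<in> I0'' \<Longrightarrow> 0 < p i" unfolding I0''_def I'_def by auto
lemma lam_less_1: "i \<in> I0'' \<Longrightarrow> lam < 1" unfolding I0''_def by auto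
lemma p1_pos: "j \<in> I1' \<Longrightarrow> 0 < p1 j" unfolding I1'_def by auto

lemma emeasure_P_eq: "emeasure P A = ennreal (measure P A)" if "A \<in> sets borel" for A
  using that sP finite_measure.emeasure_eq_measure[OF prob_space.finite_measure[OF P]] by simp

lemma T_cases: "t \<in> T \<Longrightarrow> (\<exists>i\<in>I0''. t = ytag i) \<or> (\<exists>j\<in>I1'. t = xtag j)"
  unfolding T_def by auto

lemma h_nonneg: "0 \<le> h t x"
  unfolding h_def using lam posterior_nonneg by (auto intro!: mult_nonneg_nonneg)

lemma k_nonneg: "0 \<le> k t x"
  unfolding k_def using lam by (auto intro!: mult_nonneg_nonneg)

lemma w_pos:
  assumes "t \<in> T" shows "0 < w t"
  using T_cases[OF assms] lam p_pos lam_less_1 p1_pos by (auto simp: w_ytag w_xtag)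

lemma h_le_1: "h t x \<le> 1"
proof -
  have "(1 - lam) * a i x \<le> 1" for i
  proof -
    have "(1 - lam) * a i x \<le> 1 * 1" using lam posterior_nonneg[of i x] posterior_le_1[of i x] by (intro mult_mono) auto
    then show ?thesis by simp
  qed
  moreover have "lam * indicator A x \<le> (1::real)" for A using lam by (auto simp: indicator_def)
  ultimately show ?thesis unfolding h_def by auto
qed

lemma nn_integral_h:
  assumes "t \<in> T" shows "(\<integral>\<^sup>+x. ennreal (h t x) \<partial>P) = ennreal (w t)"
  using T_cases[OF assms]
proof
  assume "\<exists>i\<in>I0''. t = ytag i"
  then obtain i where i: "i \<in> I0''" "t = ytag i" by blast
  have "(\<integral>\<^sup>+x. ennreal (h t x) \<partial>P) = (\<integral>\<^sup>+x. ennreal (1 - lam) * ennreal (a i x) \<partial>P)"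
    using i lam posterior_nonneg by (intro nn_integral_cong) (simp add: h_ytag ennreal_mult)
  also have "\<dots> = ennreal (1 - lam) * ennreal (p i)" by (simp add: nn_integral_cmult nn_integral_posterior)
  also have "\<dots> = ennreal (w t)" using i lam cell_prob_nonneg by (simp add: w_ytag ennreal_mult)
  finally show ?thesis .
next
  assume "\<exists>j\<in>I1'. t = xtag j"
  then obtain j where j: "j \<in> I1'" "t = xtag j" by blast
  have "(\<integral>\<^sup>+x. ennreal (h t x) \<partial>P) = (\<integral>\<^sup>+x. ennreal lam * indicator (C1 j) x \<partial>P)"
    using j lam by (intro nn_integral_cong) (simp add: h_xtag ennreal_mult indicator_def)
  also have "\<dots> = ennreal lam * ennreal (p1 j)" using sP by (simp add: nn_integral_cmult emeasure_P_eq p1_def)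
  also have "\<dots> = ennreal (w t)" using j lam by (simp add: w_xtag ennreal_mult p1_def)
  finally show ?thesis .
qed

lemma nn_integral_k:
  assumes "t \<in> T" shows "(\<integral>\<^sup>+x. ennreal (k t x) \<partial>P) = ennreal (w t)"
  using T_cases[OF assms]
proof
  assume "\<exists>i\<in>I0''. t = ytag i"
  then obtain i where i: "i \<in> I0''" "t = ytag i" by blast
  have "(\<integral>\<^sup>+x. ennreal (k t x) \<partial>P) = (\<integral>\<^sup>+x. ennreal (1 - lam) * indicator (C0 i) x \<partial>P)"
    using i lam by (intro nn_integral_cong) (simp add: k_ytag ennreal_mult indicator_def)
  also have "\<dots> = ennreal (1 - lam) * ennreal (p i)" using sP by (simp add: nn_integral_cmult emeasure_P_eq p_def)
  also have "\<dots> = ennreal (w t)" using i lam cell_prob_nonneg by (simp add: w_ytag ennreal_mult)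
  finally show ?thesis .
next
  assume "\<exists>j\<in>I1'. t = xtag j"
  then obtain j where j: "j \<in> I1'" "t = xtag j" by blast
  have "(\<integral>\<^sup>+x. ennreal (k t x) \<partial>P) = (\<integral>\<^sup>+x. ennreal lam * indicator (C1 j) x \<partial>P)"
    using j lam by (intro nn_integral_cong) (simp add: k_xtag ennreal_mult indicator_def)
  also have "\<dots> = ennreal lam * ennreal (p1 j)" using sP by (simp add: nn_integral_cmult emeasure_P_eq p1_def)
  also have "\<dots> = ennreal (w t)" using j lam by (simp add: w_xtag ennreal_mult p1_def)
  finally show ?thesis .
qed

lemma AE_sum_C0: "AE x in P. (\<Sum>i\<in>I'. indicator (C0 i) x :: real) = 1"
  using AE_sum_indicator_positive_cells[OF P sP part] unfolding I'_def p_def .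

lemma AE_sum_C1: "AE x in P. (\<Sum>j\<in>I1'. indicator (C1 j) x :: real) = 1"
  using AE_sum_indicator_positive_cells[OF P sP part1] unfolding I1'_def p1_def .

lemma AE_sum_h: "AE x in P. (\<Sum>t\<in>T. h t x) = 1"
  using AE_sum_C1 AE_sum_posterior
proof eventually_elim
  case (elim x)
  have "(\<Sum>t\<in>T. h t x) = (\<Sum>i\<in>I0''. h (ytag i) x) + (\<Sum>j\<in>I1'. h (xtag j) x)"
    unfolding T_def by (rule sum_tags[OF finI0'' finI1'])
  also have "(\<Sum>i\<in>I0''. h (ytag i) x) = (1 - lam) * (\<Sum>i\<in>I0''. a i x)"
    by (simp add: h_ytag sum_distrib_left)
  also have "(\<Sum>j\<in>I1'. h (xtag j) x) = lam * (\<Sum>j\<in>I1'. indicator (C1 j) x)"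
    by (simp add: h_xtag sum_distrib_left)
  also have "(1 - lam) * (\<Sum>i\<in>I0''. a i x) = 1 - lam"
  proof (cases "lam < 1")
    case True then have "I0'' = I'" unfolding I0''_def by auto
    then show ?thesis using elim by simp
  next
    case False then show ?thesis using lam by simp
  qed
  finally show ?case using elim by simp
qed

lemma AE_sum_k: "AE x in P. (\<Sum>t\<in>T. k t x) = 1"
  using AE_sum_C1 AE_sum_C0
proof eventually_elim
  case (elim x)
  have "(\<Sum>t\<in>T. k t x) = (\<Sum>i\<in>I0''. k (ytag i) x) + (\<Sum>j\<in>I1'. k (xtag j) x)"
    unfolding T_def by (rule sum_tags[OF finI0'' finI1'])
  also have "(\<Sum>i\<in>I0''. k (ytag i) x) = (1 - lam) * (\<Sum>i\<in>I0''. indicator (C0 i) x)"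
    by (simp add: k_ytag sum_distrib_left)
  also have "(\<Sum>j\<in>I1'. k (xtag j) x) = lam * (\<Sum>j\<in>I1'. indicator (C1 j) x)"
    by (simp add: k_xtag sum_distrib_left)
  also have "(1 - lam) * (\<Sum>i\<in>I0''. indicator (C0 i) x) = 1 - lam"
  proof (cases "lam < 1")
    case True then have "I0'' = I'" unfolding I0''_def by auto
    then show ?thesis using elim by simp
  next
    case False then show ?thesis using lam by simp
  qed
  finally show ?case using elim by simp
qed

sublocale F: tagged_coupling P T h k w
  using P sP finT T_ne h_nonneg h_le_1 k_nonneg w_pos nn_integral_h nn_integral_k AE_sum_h AE_sum_k
  by unfold_locales auto

definition "rate_xtags = (\<Sum>j\<in>I1'. \<integral>x. indicator (C1 j) x * ln (indicator (C1 j) x / p1 j) \<partial>P)"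
definition "rate_ytags = (\<Sum>i\<in>I0''. \<integral>x. a i x * ln (a i x / p i) \<partial>P)"

lemma mutual_info_N_eq: "mutual_info F.N fst F.Xt = ereal ((1 - lam) * rate_ytags + lam * rate_xtags)"
proof -
  have "(\<Sum>t\<in>T. \<integral>x. h t x * ln (h t x / w t) \<partial>P)
      = (\<Sum>i\<in>I0''. \<integral>x. h (ytag i) x * ln (h (ytag i) x / w (ytag i)) \<partial>P) + (\<Sum>j\<in>I1'. \<integral>x. h (xtag j) x * ln (h (xtag j) x / w (xtag j)) \<partial>P)"
    unfolding T_def by (rule sum_tags[OF finI0'' finI1'])
  also have "(\<Sum>i\<in>I0''. \<integral>x. h (ytag i) x * ln (h (ytag i) x / w (ytag i)) \<partial>P) = (1 - lam) * rate_ytags"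
    unfolding rate_ytags_def sum_distrib_left
  proof (rule sum.cong[OF refl])
    fix i assume i: "i \<in> I0''"
    have l: "1 - lam \<noteq> 0" using lam_less_1[OF i] by simp
    have "(\<integral>x. h (ytag i) x * ln (h (ytag i) x / w (ytag i)) \<partial>P) = (\<integral>x. (1 - lam) * (a i x * ln (a i x / p i)) \<partial>P)"
      using i l by (intro Bochner_Integration.integral_cong) (simp_all add: h_ytag w_ytag)
    also have "\<dots> = (1 - lam) * (\<integral>x. a i x * ln (a i x / p i) \<partial>P)" by simp
    finally show "(\<integral>x. h (ytag i) x * ln (h (ytag i) x / w (ytag i)) \<partial>P) = (1 - lam) * (\<integral>x. a i x * ln (a i x / p i) \<partial>P)" .
  qed
  also have "(\<Sum>j\<in>I1'. \<integral>x. h (xtag j) x * ln (h (xtag j) x / w (xtag j)) \<partial>P) = lam * rate_xtags"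
    unfolding rate_xtags_def sum_distrib_left
  proof (rule sum.cong[OF refl])
    fix j assume j: "j \<in> I1'"
    have l: "lam \<noteq> 0" using lam by simp
    have "(\<integral>x. h (xtag j) x * ln (h (xtag j) x / w (xtag j)) \<partial>P) = (\<integral>x. lam * (indicator (C1 j) x * ln (indicator (C1 j) x / p1 j)) \<partial>P)"
      using j l by (intro Bochner_Integration.integral_cong) (simp_all add: h_xtag w_xtag indicator_def)
    also have "\<dots> = lam * (\<integral>x. indicator (C1 j) x * ln (indicator (C1 j) x / p1 j) \<partial>P)" by simp
    finally show "(\<integral>x. h (xtag j) x * ln (h (xtag j) x / w (xtag j)) \<partial>P) = lam * (\<integral>x. indicator (C1 j) x * ln (indicator (C1 j) x / p1 j) \<partial>P)" .
  qed
  finally show ?thesis using F.mutual_info_fst_tag by simp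
qed

lemma rate_ytags_le: "lam < 1 \<Longrightarrow> rate_ytags \<le> (\<integral>z. f z * ln (f z) \<partial>(P \<Otimes>\<^sub>M P))"
proof -
  assume "lam < 1"
  then have "I0'' = I'" unfolding I0''_def by auto
  then show ?thesis unfolding rate_ytags_def using data_processing_le by simp
qed

lemma nn_integral_distortion_ytag_le:
  assumes i: "i \<in> I0''" and eta: "0 < \<eta>"
  shows "(\<integral>\<^sup>+x. \<integral>\<^sup>+y. ennreal ((x - y)^2) * ennreal (h (ytag i) x * k (ytag i) y / w (ytag i)) \<partial>P \<partial>P) \<le> ennreal (1 - lam) * (ennreal (1 + \<eta>) * cell_distortion i + ennreal (1 + 1 / \<eta>) * ennreal (1 / p i) * cell_spread P (C0 i))"
proof -
  have l: "0 < 1 - lam" using lam_less_1[OF i] by simp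
  have "h (ytag i) x * k (ytag i) y / w (ytag i) = (1 - lam) * a i x * indicator (C0 i) y / p i" for x y
  proof -
    have "h (ytag i) x * k (ytag i) y / w (ytag i) = ((1 - lam) * ((1 - lam) * a i x * indicator (C0 i) y)) / ((1 - lam) * p i)"
      using i by (simp add: h_ytag k_ytag w_ytag mult_ac)
    also have "\<dots> = (1 - lam) * a i x * indicator (C0 i) y / p i"
      using l by (rule mult_divide_mult_cancel_left[OF less_imp_neq[symmetric]])
    finally show ?thesis .
  qed
  then have "(\<integral>\<^sup>+x. \<integral>\<^sup>+y. ennreal ((x - y)^2) * ennreal (h (ytag i) x * k (ytag i) y / w (ytag i)) \<partial>P \<partial>P)
      = (\<integral>\<^sup>+x. \<integral>\<^sup>+y. ennreal ((x - y)^2) * ennreal ((1 - lam) * a i x * indicator (C0 i) y / p i) \<partial>P \<partial>P)"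
    by (simp only:)
  also have "\<dots> \<le> ennreal (1 - lam) * (ennreal (1 + \<eta>) * cell_distortion i + ennreal (1 + 1 / \<eta>) * ennreal (1 / p i) * cell_spread P (C0 i))"
    using i l eta unfolding I0''_def by (intro nn_integral_cell_distortion_le) auto
  finally show ?thesis .
qed

lemma nn_integral_distortion_xtag:
  assumes j: "j \<in> I1'"
  shows "(\<integral>\<^sup>+x. \<integral>\<^sup>+y. ennreal ((x - y)^2) * ennreal (h (xtag j) x * k (xtag j) y / w (xtag j)) \<partial>P \<partial>P) = ennreal lam * (ennreal (1 / p1 j) * cell_spread P (C1 j))"
proof -
  have "(\<integral>\<^sup>+x. \<integral>\<^sup>+y. ennreal ((x - y)^2) * ennreal (h (xtag j) x * k (xtag j) y / w (xtag j)) \<partial>P \<partial>P) = (\<integral>\<^sup>+x. \<integral>\<^sup>+y. (ennreal lam * ennreal (1 / p1 j)) * (ennreal ((x - y)^2) * indicator (C1 j) x * indicator (C1 j) y) \<partial>P \<partial>P)"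
    using j lam p1_pos[OF j] by (intro nn_integral_cong) (auto simp: h_xtag k_xtag w_xtag indicator_def ennreal_mult[symmetric])
  also have "\<dots> = (ennreal lam * ennreal (1 / p1 j)) * cell_spread P (C1 j)"
    unfolding cell_spread_def
    by (subst nn_integral_cmult[symmetric]) (rule sigma_finite_measure.borel_measurable_nn_integral[OF sigma_finite_P], measurable, simp add: nn_integral_cmult)
  finally show ?thesis by (simp add: mult.assoc)
qed

lemma nn_integral_N_distortion_le:
  assumes eta: "0 < \<eta>"
  shows "(\<integral>\<^sup>+\<omega>. ennreal ((fst \<omega> - snd (snd \<omega>))^2) \<partial>F.N)
    \<le> ennreal (1 - lam) * (ennreal (1 + \<eta>) * (\<integral>\<^sup>+x. \<integral>\<^sup>+y. ennreal ((x - y)^2) * ennreal (f (x,y)) \<partial>P \<partial>P)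
         + ennreal (1 + 1 / \<eta>) * partition_spread P I0 C0)
       + ennreal lam * partition_spread P I1 C1"
proof -
  let ?d = "\<lambda>t. \<integral>\<^sup>+x. \<integral>\<^sup>+y. ennreal ((x - y)^2) * ennreal (h t x * k t y / w t) \<partial>P \<partial>P"
  let ?S = "\<lambda>i. ennreal (1 / p i) * cell_spread P (C0 i)"
  have sub: "I0'' \<subseteq> I'" unfolding I0''_def by auto
  have "(\<Sum>i\<in>I0''. ?d (ytag i))
      \<le> (\<Sum>i\<in>I0''. ennreal (1 - lam) * (ennreal (1 + \<eta>) * cell_distortion i + ennreal (1 + 1 / \<eta>) * ennreal (1 / p i) * cell_spread P (C0 i)))"
    by (rule sum_mono) (rule nn_integral_distortion_ytag_le[OF _ eta])
  also have "\<dots> = ennreal (1 - lam) * (ennreal (1 + \<eta>) * (\<Sum>i\<in>I0''. cell_distortion i) + ennreal (1 + 1 / \<eta>) * (\<Sum>i\<in>I0''. ?S i))"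
    by (simp only: mult.assoc sum_distrib_left[symmetric] sum.distrib)
  also have "\<dots> \<le> ennreal (1 - lam) * (ennreal (1 + \<eta>) * (\<integral>\<^sup>+x. \<integral>\<^sup>+y. ennreal ((x - y)^2) * ennreal (f (x,y)) \<partial>P \<partial>P)
         + ennreal (1 + 1 / \<eta>) * partition_spread P I0 C0)"
  proof -
    have "(\<Sum>i\<in>I0''. cell_distortion i) \<le> (\<integral>\<^sup>+x. \<integral>\<^sup>+y. ennreal ((x - y)^2) * ennreal (f (x,y)) \<partial>P \<partial>P)"
      using sum_mono2[OF finI' sub, of cell_distortion] sum_cell_distortion_le by (rule order_trans) simp
    moreover have "(\<Sum>i\<in>I0''. ?S i) \<le> partition_spread P I0 C0"
      unfolding partition_spread_def I'_def[symmetric] p_def[symmetric] by (rule sum_mono2[OF finI' sub]) simp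
    ultimately show ?thesis by (intro mult_left_mono add_mono) auto
  qed
  finally have Y: "(\<Sum>i\<in>I0''. ?d (ytag i)) \<le> ennreal (1 - lam) * (ennreal (1 + \<eta>) * (\<integral>\<^sup>+x. \<integral>\<^sup>+y. ennreal ((x - y)^2) * ennreal (f (x,y)) \<partial>P \<partial>P)
         + ennreal (1 + 1 / \<eta>) * partition_spread P I0 C0)" .
  have "(\<Sum>j\<in>I1'. ?d (xtag j)) = (\<Sum>j\<in>I1'. ennreal lam * (ennreal (1 / p1 j) * cell_spread P (C1 j)))"
    by (rule sum.cong[OF refl]) (rule nn_integral_distortion_xtag)
  also have "\<dots> = ennreal lam * partition_spread P I1 C1"
    unfolding partition_spread_def I1'_def[symmetric] p1_def[symmetric] by (rule sum_distrib_left[symmetric])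
  finally have X: "(\<Sum>j\<in>I1'. ?d (xtag j)) = ennreal lam * partition_spread P I1 C1" .
  have "(\<integral>\<^sup>+\<omega>. ennreal ((fst \<omega> - snd (snd \<omega>))^2) \<partial>F.N) = (\<Sum>t\<in>T. ?d t)"
    by (rule F.nn_integral_N_distortion)
  also have "\<dots> = (\<Sum>i\<in>I0''. ?d (ytag i)) + (\<Sum>j\<in>I1'. ?d (xtag j))"
    unfolding T_def by (rule sum_tags[OF finI0'' finI1'])
  also have "\<dots> \<le> ennreal (1 - lam) * (ennreal (1 + \<eta>) * (\<integral>\<^sup>+x. \<integral>\<^sup>+y. ennreal ((x - y)^2) * ennreal (f (x,y)) \<partial>P \<partial>P)
         + ennreal (1 + 1 / \<eta>) * partition_spread P I0 C0) + ennreal lam * partition_spread P I1 C1"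
    by (rule add_mono[OF Y eq_refl[OF X]])
  finally show ?thesis .
qed

lemma mutual_info_N_le:
  defines "m \<equiv> (\<integral>z. f z * ln (f z) \<partial>(P \<Otimes>\<^sub>M P))"
  assumes "lam < 1"
  shows "mutual_info F.N fst F.Xt \<le> ereal (m + lam * (\<bar>rate_xtags\<bar> + \<bar>m\<bar> + 1))"
proof -
  have "(1 - lam) * rate_ytags \<le> (1 - lam) * m"
    using rate_ytags_le assms by (intro mult_left_mono) (auto simp: m_def)
  moreover have "lam * (rate_xtags - m) \<le> lam * (\<bar>rate_xtags\<bar> + \<bar>m\<bar> + 1)"
    using lam by (intro mult_left_mono) auto
  ultimately show ?thesis unfolding mutual_info_N_eq by (simp add: algebra_simps)
qed

lemma nn_integral_N_distortion_le_budget: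
  defines "\<eta> \<equiv> lam / (4 * (1 - lam))"
  assumes lam1: "lam < 1" and D: "0 < D"
    and dist: "(\<integral>\<^sup>+x. \<integral>\<^sup>+y. ennreal ((x - y)^2) * ennreal (f (x,y)) \<partial>P \<partial>P) \<le> ennreal D"
    and spread0: "partition_spread P I0 C0 \<le> ennreal (lam * D / (4 * (1 - lam) * (1 + 1 / \<eta>)))"
    and spread1: "partition_spread P I1 C1 \<le> ennreal (D / 2)"
  shows "(\<integral>\<^sup>+\<omega>. ennreal ((fst \<omega> - snd (snd \<omega>))^2) \<partial>F.N) \<le> ennreal D"
proof -
  define \<delta> where "\<delta> = lam * D / (4 * (1 - lam) * (1 + 1 / \<eta>))"
  have \<eta>: "0 < \<eta>" unfolding \<eta>_def using lam lam1 by simp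
  then have \<delta>: "0 < \<delta>" unfolding \<delta>_def using lam lam1 D by (simp add: add_pos_pos)
  have "(\<integral>\<^sup>+\<omega>. ennreal ((fst \<omega> - snd (snd \<omega>))^2) \<partial>F.N)
      \<le> ennreal (1 - lam) * (ennreal (1 + \<eta>) * ennreal D + ennreal (1 + 1 / \<eta>) * ennreal \<delta>) + ennreal lam * ennreal (D / 2)"
    using nn_integral_N_distortion_le[OF \<eta>]
    by (rule order_trans) (intro add_mono mult_left_mono dist spread0[folded \<delta>_def] spread1 order_refl zero_le)+
  also have "\<dots> = ennreal ((1 - lam) * ((1 + \<eta>) * D + (1 + 1 / \<eta>) * \<delta>) + lam * (D / 2))"
    using lam lam1 \<eta> \<delta> D
    by (simp add: ennreal_mult[symmetric] ennreal_plus[symmetric] add_nonneg_nonneg mult_nonneg_nonneg del: ennreal_plus)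
  also have "\<dots> = ennreal D" unfolding \<delta>_def \<eta>_def using distortion_budget lam lam1 by simp
  finally show ?thesis .
qed

lemma realism_scheme_N:
  assumes "mutual_info F.N fst F.Xt \<le> B"
    and "(\<integral>\<^sup>+\<omega>. ennreal ((fst \<omega> - snd (snd \<omega>))^2) \<partial>F.N) \<le> ennreal D"
  shows "realism_scheme P D B F.N fst F.Xt (\<lambda>\<omega>. snd (snd \<omega>))"
  unfolding realism_scheme_def
proof (intro conjI)
  show "finite (F.Xt ` space F.N)" by (rule finite_subset[OF _ finT]) (use F.Xt_in in auto)
qed (use assms F.prob_space_N F.distr_N_fst F.distr_N_Xh F.markov_chain in auto)

end

lemma scheme_from_coupling_density:
  assumes P: "prob_space P" and sP: "sets P = sets borel" and int2: "integrable P (\<lambda>y. y^2)"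
    and D: "0 < D" and e: "0 < \<epsilon>"
    and f: "coupling_density P f" and fint: "integrable (P \<Otimes>\<^sub>M P) (\<lambda>z. f z * ln (f z))"
    and dist: "(\<integral>\<^sup>+x. \<integral>\<^sup>+y. ennreal ((x - y)^2) * ennreal (f (x,y)) \<partial>P \<partial>P) \<le> ennreal D"
    and B: "ereal ((\<integral>z. f z * ln (f z) \<partial>(P \<Otimes>\<^sub>M P)) + \<epsilon>) \<le> B"
  shows "\<exists>N X Xt Xh. realism_scheme P D B N X Xt Xh"
proof -
  define m where "m = (\<integral>z. f z * ln (f z) \<partial>(P \<Otimes>\<^sub>M P))"
  obtain I1 :: "int set" and C1 where part1: "borel_partition I1 C1"
    and spread1: "partition_spread P I1 C1 \<le> ennreal (D / 2)"
    using exists_partition_spread_le[OF P sP int2 half_gt_zero[OF D]] by blast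
  define c where "c = (\<Sum>j\<in>{j\<in>I1. 0 < measure P (C1 j)}.
    \<integral>x. indicator (C1 j) x * ln (indicator (C1 j) x / measure P (C1 j)) \<partial>P)"
  text \<open>Mixing in source tags with probability \<open>lam\<close> costs at most \<open>lam (\<bar>c\<bar> + \<bar>m\<bar>)\<close> in rate, \<open>c\<close> being
    the entropy of the source partition, and lets the reconstruction tags use the slack
    \<open>(1 + \<eta>) D\<close> with \<open>\<eta>\<close> of order \<open>lam\<close>.\<close>
  define lam where "lam = min (1/2) (\<epsilon> / (\<bar>c\<bar> + \<bar>m\<bar> + 1))"
  have K: "0 < \<bar>c\<bar> + \<bar>m\<bar> + 1" by (simp add: add_nonneg_pos)
  then have lam: "0 < lam" "lam < 1" using e unfolding lam_def by simp_all
  have "lam \<le> \<epsilon> / (\<bar>c\<bar> + \<bar>m\<bar> + 1)" unfolding lam_def by simp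
  then have lam_rate: "lam * (\<bar>c\<bar> + \<bar>m\<bar> + 1) \<le> \<epsilon>" using K by (simp add: pos_le_divide_eq)
  define \<eta> where "\<eta> = lam / (4 * (1 - lam))"
  define \<delta> where "\<delta> = lam * D / (4 * (1 - lam) * (1 + 1 / \<eta>))"
  have "0 < \<eta>" unfolding \<eta>_def using lam by simp
  then have \<delta>: "0 < \<delta>" unfolding \<delta>_def using lam D by (simp add: add_pos_pos)
  obtain I0 :: "int set" and C0 where part0: "borel_partition I0 C0"
    and spread0: "partition_spread P I0 C0 \<le> ennreal \<delta>"
    using exists_partition_spread_le[OF P sP int2 \<delta>] by blast
  interpret M: mixed_tagging P f I0 C0 I1 C1 lam
    by (intro mixed_tagging.intro cell_posterior.intro mixed_tagging_axioms.intro P sP f fint part0 part1)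
      (use lam in auto)
  have "M.rate_xtags = c" unfolding M.rate_xtags_def M.I1'_def M.p1_def c_def ..
  then have "mutual_info M.F.N fst M.F.Xt \<le> ereal (m + lam * (\<bar>c\<bar> + \<bar>m\<bar> + 1))"
    using M.mutual_info_N_le[OF lam(2)] unfolding m_def by simp
  also have "\<dots> \<le> B" using B lam_rate unfolding m_def by (auto elim: order_trans[rotated])
  finally have rate: "mutual_info M.F.N fst M.F.Xt \<le> B" .
  have distortion: "(\<integral>\<^sup>+\<omega>. ennreal ((fst \<omega> - snd (snd \<omega>))^2) \<partial>M.F.N) \<le> ennreal D"
    using M.nn_integral_N_distortion_le_budget[OF lam(2) D dist _ spread1] spread0 unfolding \<delta>_def \<eta>_def .
  show ?thesis by (intro exI) (rule M.realism_scheme_N[OF rate distortion])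
qed

lemma scheme_without_rate_bound:
  assumes P: "prob_space P" and sP: "sets P = sets borel" and int2: "integrable P (\<lambda>y. y^2)"
    and D: "0 < D"
  shows "\<exists>N X Xt Xh. realism_scheme P D \<infinity> N X Xt Xh"
proof -
  obtain I :: "int set" and C where part: "borel_partition I C" and spread: "partition_spread P I C \<le> ennreal D"
    using exists_partition_spread_le[OF P sP int2 D] by blast
  have "coupling_density P (\<lambda>_. 1)"
    using P by (simp add: coupling_density_def prob_space.emeasure_space_1)
  then interpret M: mixed_tagging P "\<lambda>_. 1" I C I C 1
    by (intro mixed_tagging.intro cell_posterior.intro mixed_tagging_axioms.intro P sP part) simp_all
  have "(\<integral>\<^sup>+\<omega>. ennreal ((fst \<omega> - snd (snd \<omega>))^2) \<partial>M.F.N)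
      \<le> ennreal (1 - 1) * (ennreal (1 + 1) * (\<integral>\<^sup>+x. \<integral>\<^sup>+y. ennreal ((x - y)^2) * ennreal 1 \<partial>P \<partial>P)
         + ennreal (1 + 1 / 1) * partition_spread P I C) + ennreal 1 * partition_spread P I C"
    by (rule M.nn_integral_N_distortion_le) simp
  also have "\<dots> = partition_spread P I C" by simp
  finally have distortion: "(\<integral>\<^sup>+\<omega>. ennreal ((fst \<omega> - snd (snd \<omega>))^2) \<partial>M.F.N) \<le> ennreal D"
    using spread by (rule order_trans)
  show ?thesis by (intro exI) (rule M.realism_scheme_N[OF _ distortion], simp)
qed

theorem mainTheorem14:
  fixes M :: "'a measure" and X :: "'a \<Rightarrow> real" and D \<epsilon> :: real
  assumes "prob_space M"
    and "X \<in> borel_measurable M"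
    and "integrable M (\<lambda>\<omega>. (X \<omega>)^2)"
    and "D > 0" and "\<epsilon> > 0"
  shows "\<exists>(N :: (real \<times> real \<times> real) measure) X' Xt Xh.
           prob_space N \<and>
           X' \<in> borel_measurable N \<and> Xt \<in> borel_measurable N \<and> Xh \<in> borel_measurable N \<and>
           distr N borel X' = distr M borel X \<and>
           finite (Xt ` space N) \<and>
           markov_chain_fin_mid N X' Xt Xh \<and>
           mutual_info N X' Xt \<le> rate_perfect_realism (distr M borel X) D + ereal \<epsilon> \<and>
           (\<integral>\<^sup>+ \<omega>. ennreal ((X' \<omega> - Xh \<omega>)^2) \<partial>N) \<le> ennreal D \<and>
           distr N borel Xh = distr M borel X"
proof -
  define P where "P = distr M borel X"
  have P: "prob_space P" unfolding P_def by (rule prob_space.prob_space_distr) (use assms in auto)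
  have sP: "sets P = sets borel" unfolding P_def by simp
  have int2: "integrable P (\<lambda>y. y^2)" unfolding P_def using assms(2,3) by (subst integrable_distr_eq) auto
  have "\<exists>N X' Xt Xh. realism_scheme P D (rate_perfect_realism P D + ereal \<epsilon>) N X' Xt Xh"
  proof (cases "rate_perfect_realism P D")
    case (real r)
    then obtain f where "coupling_density P f" "integrable (P \<Otimes>\<^sub>M P) (\<lambda>z. f z * ln (f z))"
      "(\<integral>z. f z * ln (f z) \<partial>(P \<Otimes>\<^sub>M P)) < r + \<epsilon> / 2"
      "(\<integral>\<^sup>+x. \<integral>\<^sup>+y. ennreal ((x - y)^2) * ennreal (f (x,y)) \<partial>P \<partial>P) \<le> ennreal D"
      using rate_perfect_realism_approx[OF P sP, of D "r + \<epsilon> / 2"] assms(5) by auto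
    with real show ?thesis using assms(4,5) by (intro scheme_from_coupling_density[OF P sP int2, of D "\<epsilon> / 2"]) auto
  next
    case PInf
    then show ?thesis using scheme_without_rate_bound[OF P sP int2 assms(4)] by simp
  next
    case MInf
    then show ?thesis using rate_perfect_realism_nonneg[OF P sP, of D] by simp
  qed
  then show ?thesis unfolding realism_scheme_def P_def by (elim exE conjE) (intro exI conjI; assumption)
qed

end
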